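(* Assume (H1), (H3), (H4) with $\alpha+1=p^*$. There exist $\Lambda^*>0$ and $D_2>0$ such that for every $\lambda\in(0,\Lambda^* )$ there is $D_1=D_1(\lambda)>D_2$ with $$\int_\Omega H(\nabla U)^p\,dx\ge D_1>D_2\ge\int_\Omega\big(H(\nabla u)^p+\mu(x)H(\nabla u)^q\big)dx\quad\text{for all }u\in M_\lambda^+,\ U\in M_\lambda^-.$$
   Context: Let $\Omega\subset\mathbb R^N$, $N\ge2$, be a bounded Lipschitz domain; $H$ is a Finsler–Minkowski norm on $\mathbb R^N$ ($H(\xi)=0$ iff $\xi=0$, $H\in C^\infty(\mathbb R^N\setminus\{0\})$, $H(t\xi)=|t|H(\xi)$, Hessian of $H^2/2$ positive definite off $0$). (H1): $\lambda>0$, $0<\delta<1$, $2\le p<q<N$, $q<\alpha+1\le p^*:=\frac{Np}{N-p}$, $\frac qp<1+\frac1N$, $0\le\mu\in C^{0,1}(\overline\Omega)$. (H3): $a>0$ a.e., $a\in L^{p^*/(p^*-1+\delta)}(\Omega)$. (H4): $b\in L^\infty(\Omega)$, possibly sign-changing, $b^+\not\equiv0$. $W_0^{1,\mathcal H}(\Omega)$ is the completion of $C_c^\infty(\Omega)$ in $\{u\in L^{\mathcal H}:H(\nabla u)\in L^{\mathcal H}\}$, $\mathcal H(x,t)=t^p+\mu(x)t^q$, with norm $\|u\|=\|H(\nabla u)\|_{\mathcal H}$ (Luxemburg norm). $I_\lambda(u)=\int_\Omega\big(\frac{H(\nabla u)^p}{p}+\mu\frac{H(\nabla u)^q}{q}\big)dx-\frac1{1-\delta}\int_\Omega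 a|u|^{1-\delta}dx-\frac{\lambda}{p^*}\int_\Omega b|u|^{p^*}dx$; $\phi_u(t)=I_\lambda(tu)$. $M_\lambda=\{u\ne0:\phi_u'(1)=0\}$, $M_\lambda^\pm=\{u\in M_\lambda:\pm\phi_u''(1)>0\}$, where $\phi_u'(1)=\int_\Omega(H(\nabla u)^p+\mu H(\nabla u)^q)-\int_\Omega a|u|^{1-\delta}-\lambda\int_\Omega b|u|^{p^*}$ and $\phi_u''(1)=\int_\Omega((p-1)H(\nabla u)^p+(q-1)\mu H(\nabla u)^q)+\delta\int_\Omega a|u|^{1-\delta}-\lambda(p^*-1)\int_\Omega b|u|^{p^*}$. *)

theory Defs
  imports "HOL-Analysis.Analysis"
begin

definition partial :: "'n::finite \<Rightarrow> (real^'n \<Rightarrow> real) \<Rightarrow> real^'n \<Rightarrow> real" where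
  "partial i f x = deriv (\<lambda>t. f (x + t *\<^sub>R axis i 1)) 0"

fun iter_partial :: "'n::finite list \<Rightarrow> (real^'n \<Rightarrow> real) \<Rightarrow> real^'n \<Rightarrow> real" where
  "iter_partial [] f = f"
| "iter_partial (i # is) f = partial i (iter_partial is f)"

definition C_inf_on :: "(real^'n::finite) set \<Rightarrow> (real^'n \<Rightarrow> real) \<Rightarrow> bool" where
  "C_inf_on S f \<longleftrightarrow> (\<forall>is. iter_partial is f differentiable_on S)"

definition grad :: "(real^'n::finite \<Rightarrow> real) \<Rightarrow> real^'n \<Rightarrow> real^'n" where
  "grad f x = (\<chi> i. partial i f x)"

definition Cc_inf :: "(real^'n::finite) set \<Rightarrow> (real^'n \<Rightarrow> real) set" where
  "Cc_inf \<Omega> = {\<phi>. C_inf_on UNIV \<phi> \<and> compact (closure {x. \<phi> x \<noteq> 0})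
                     \<and> closure {x. \<phi> x \<noteq> 0} \<subseteq> \<Omega>}"

definition finsler_minkowski_norm :: "(real^'n::finite \<Rightarrow> real) \<Rightarrow> bool" where
  "finsler_minkowski_norm H \<longleftrightarrow>
     (\<forall>\<xi>. H \<xi> = 0 \<longleftrightarrow> \<xi> = 0)
   \<and> C_inf_on (UNIV - {0}) H
   \<and> (\<forall>t \<xi>. H (t *\<^sub>R \<xi>) = \<bar>t\<bar> * H \<xi>)
   \<and> (\<forall>\<xi> v. \<xi> \<noteq> 0 \<longrightarrow> v \<noteq> 0 \<longrightarrow>
        (\<Sum>i\<in>UNIV. \<Sum>j\<in>UNIV. partial i (partial j (\<lambda>\<zeta>. (H \<zeta>)\<^sup>2 / 2)) \<xi> * v$i * v$j) > 0)"

definition lipschitz_domain :: "(real^'n::finite) set \<Rightarrow> bool" where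
  "lipschitz_domain \<Omega> \<longleftrightarrow> open \<Omega> \<and> connected \<Omega> \<and> \<Omega> \<noteq> {} \<and>
     (\<forall>x0\<in>frontier \<Omega>. \<exists>r>0. \<exists>T k (g::real^'n \<Rightarrow> real) L.
        orthogonal_transformation T \<and> L-lipschitz_on UNIV g \<and>
        (\<forall>y z. (\<forall>i. i \<noteq> k \<longrightarrow> y$i = z$i) \<longrightarrow> g y = g z) \<and>
        \<Omega> \<inter> ball x0 r = {x \<in> ball x0 r. (T (x - x0))$k < g (T (x - x0))})"

definition sobolev_conj :: "real \<Rightarrow> real \<Rightarrow> real" where
  "sobolev_conj N p = N * p / (N - p)"

definition musielak :: "(real^'n::finite \<Rightarrow> real) \<Rightarrow> real \<Rightarrow> real \<Rightarrow> real^'n \<Rightarrow> real \<Rightarrow> real" where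
  "musielak \<mu> p q x t = t powr p + \<mu> x * t powr q"

text \<open>Luxemburg norm (value in ennreal; infinity if f is not in L^H).\<close>
definition lux_norm :: "(real^'n::finite) set \<Rightarrow> (real^'n \<Rightarrow> real) \<Rightarrow> real \<Rightarrow> real \<Rightarrow> (real^'n \<Rightarrow> real) \<Rightarrow> ennreal" where
  "lux_norm \<Omega> \<mu> p q f = Inf {ennreal \<tau> | \<tau>. \<tau> > 0 \<and>
      (\<integral>\<^sup>+ x. ennreal (musielak \<mu> p q x (\<bar>f x\<bar> / \<tau>)) * indicator \<Omega> x \<partial>lebesgue) \<le> 1}"

text \<open>Elements of W_0^{1,H}(Omega), represented as pairs (u, G) where G is the gradient of u
  (the limit of the gradients of an approximating sequence of test functions).\<close>
definition W0 :: "(real^'n::finite) set \<Rightarrow> (real^'n \<Rightarrow> real) \<Rightarrow> (real^'n \<Rightarrow> real) \<Rightarrow> real \<Rightarrow> real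
                   \<Rightarrow> ((real^'n \<Rightarrow> real) \<times> (real^'n \<Rightarrow> real^'n)) set" where
  "W0 \<Omega> H \<mu> p q = {(u, G). u \<in> borel_measurable lebesgue \<and> G \<in> borel_measurable lebesgue \<and>
      (\<exists>\<phi>. (\<forall>k. \<phi> k \<in> Cc_inf \<Omega>) \<and>
           (\<lambda>k. lux_norm \<Omega> \<mu> p q (\<lambda>x. \<phi> k x - u x)) \<longlonglongrightarrow> 0 \<and>
           (\<lambda>k. lux_norm \<Omega> \<mu> p q (\<lambda>x. H (grad (\<phi> k) x - G x))) \<longlonglongrightarrow> 0)}"

definition dphi1 :: "(real^'n::finite) set \<Rightarrow> (real^'n \<Rightarrow> real) \<Rightarrow> (real^'n \<Rightarrow> real) \<Rightarrow> (real^'n \<Rightarrow> real)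
     \<Rightarrow> (real^'n \<Rightarrow> real) \<Rightarrow> real \<Rightarrow> real \<Rightarrow> real \<Rightarrow> real
     \<Rightarrow> (real^'n \<Rightarrow> real) \<times> (real^'n \<Rightarrow> real^'n) \<Rightarrow> real" where
  "dphi1 \<Omega> H \<mu> a b p q \<delta> lam uG = (case uG of (u, G) \<Rightarrow>
     (let ps = sobolev_conj (real CARD('n)) p in
      integral\<^sup>L (lebesgue_on \<Omega>) (\<lambda>x. H (G x) powr p + \<mu> x * H (G x) powr q)
      - integral\<^sup>L (lebesgue_on \<Omega>) (\<lambda>x. a x * \<bar>u x\<bar> powr (1 - \<delta>))
      - lam * integral\<^sup>L (lebesgue_on \<Omega>) (\<lambda>x. b x * \<bar>u x\<bar> powr ps)))"

definition ddphi1 :: "(real^'n::finite) set \<Rightarrow> (real^'n \<Rightarrow> real) \<Rightarrow> (real^'n \<Rightarrow> real) \<Rightarrow> (real^'n \<Rightarrow> real)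
     \<Rightarrow> (real^'n \<Rightarrow> real) \<Rightarrow> real \<Rightarrow> real \<Rightarrow> real \<Rightarrow> real
     \<Rightarrow> (real^'n \<Rightarrow> real) \<times> (real^'n \<Rightarrow> real^'n) \<Rightarrow> real" where
  "ddphi1 \<Omega> H \<mu> a b p q \<delta> lam uG = (case uG of (u, G) \<Rightarrow>
     (let ps = sobolev_conj (real CARD('n)) p in
      integral\<^sup>L (lebesgue_on \<Omega>) (\<lambda>x. (p - 1) * H (G x) powr p + (q - 1) * \<mu> x * H (G x) powr q)
      + \<delta> * integral\<^sup>L (lebesgue_on \<Omega>) (\<lambda>x. a x * \<bar>u x\<bar> powr (1 - \<delta>))
      - lam * (ps - 1) * integral\<^sup>L (lebesgue_on \<Omega>) (\<lambda>x. b x * \<bar>u x\<bar> powr ps)))"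

definition nehari :: "(real^'n::finite) set \<Rightarrow> (real^'n \<Rightarrow> real) \<Rightarrow> (real^'n \<Rightarrow> real) \<Rightarrow> (real^'n \<Rightarrow> real)
     \<Rightarrow> (real^'n \<Rightarrow> real) \<Rightarrow> real \<Rightarrow> real \<Rightarrow> real \<Rightarrow> real
     \<Rightarrow> ((real^'n \<Rightarrow> real) \<times> (real^'n \<Rightarrow> real^'n)) set" where
  "nehari \<Omega> H \<mu> a b p q \<delta> lam = {(u, G) \<in> W0 \<Omega> H \<mu> p q.
      \<not> (AE x in lebesgue_on \<Omega>. u x = 0) \<and> dphi1 \<Omega> H \<mu> a b p q \<delta> lam (u, G) = 0}"

definition nehari_plus where
  "nehari_plus \<Omega> H \<mu> a b p q \<delta> lam =
     {uG \<in> nehari \<Omega> H \<mu> a b p q \<delta> lam. ddphi1 \<Omega> H \<mu> a b p q \<delta> lam uG > 0}"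

definition nehari_minus where
  "nehari_minus \<Omega> H \<mu> a b p q \<delta> lam =
     {uG \<in> nehari \<Omega> H \<mu> a b p q \<delta> lam. ddphi1 \<Omega> H \<mu> a b p q \<delta> lam uG < 0}"

end

theory Submission
  imports Defs
begin

text \<open>
  Both estimates come from the two derivative identities of the fibering map \<open>\<phi>\<close>.
  On \<open>M\<^sup>+\<close>, combining \<open>\<phi>''(1) > 0\<close> with \<open>\<phi>'(1) = 0\<close> eliminates the critical term and bounds
  the energy by a multiple of \<open>\<integral> a |u|\<^sup>1\<^sup>-\<^sup>\<delta>\<close>; by Hoelder's and Sobolev's inequalities this is at most
  a power \<open>(1 - \<delta>)/p < 1\<close> of the energy, so the energy is bounded independently of \<open>\<lambda>\<close>.
  On \<open>M\<^sup>-\<close>, combining \<open>\<phi>''(1) < 0\<close> with \<open>\<phi>'(1) = 0\<close> eliminates the singular term and gives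
  \<open>(p - 1 + \<delta>) \<integral> H(\<nabla>U)\<^sup>p < \<lambda> K (\<integral> H(\<nabla>U)\<^sup>p)\<^sup>p\<^sup>*\<^sup>/\<^sup>p\<close>, so \<open>\<integral> H(\<nabla>U)\<^sup>p\<close> is bounded below by a
  constant times \<open>\<lambda>\<^sup>-\<^sup>p\<^sup>/\<^sup>(\<^sup>p\<^sup>*\<^sup>-\<^sup>p\<^sup>)\<close>, which exceeds the first bound for small \<open>\<lambda>\<close>.

  The Sobolev inequality used here comes from the Loomis--Whitney inequality via Gagliardo's
  inequality and the Gagliardo--Nirenberg trick for \<open>C\<^sup>1\<close> functions of compact support; it passes
  to \<open>W\<^sub>0\<^sup>1\<^sup>,\<^sup>H\<close> by Fatou's lemma along an a.e.\ convergent subsequence of approximating test functions.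
\<close>

section \<open>Hoelder's inequality for non-negative integrals\<close>

text \<open>Real powers on \<open>[0, \<infinity>]\<close>; \<open>\<infinity>\<close> is sent to \<open>\<infinity>\<close>, the right convention for the positive
  exponents used throughout.\<close>
definition enn_powr :: "ennreal \<Rightarrow> real \<Rightarrow> ennreal" where
  "enn_powr x r = (if x = top then top else ennreal (enn2real x powr r))"

lemma enn_powr_ennreal: "0 \<le> a \<Longrightarrow> enn_powr (ennreal a) r = ennreal (a powr r)"
  by (simp add: enn_powr_def)

lemma enn_powr_top[simp]: "enn_powr top r = top"
  by (simp add: enn_powr_def)

lemma enn_powr_0[simp]: "enn_powr 0 r = 0"
  by (simp add: enn_powr_def)

lemma enn_powr_eq_top_iff: "enn_powr x r = top \<longleftrightarrow> x = top"
  by (simp add: enn_powr_def)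

lemma enn_powr_eq_0_iff: "enn_powr x r = 0 \<longleftrightarrow> x = 0"
  by (cases x) (auto simp: enn_powr_def)

lemma enn_powr_1[simp]: "enn_powr x 1 = x"
  by (cases x) (auto simp: enn_powr_def)

lemma enn_powr_one[simp]: "enn_powr 1 r = 1"
  by (simp add: enn_powr_def)

lemma enn_powr_mult: "r > 0 \<Longrightarrow> enn_powr (x * y) r = enn_powr x r * enn_powr y r"
proof (cases x; cases y)
  fix a b assume x: "x = ennreal a" "0 \<le> a" and y: "y = ennreal b" "0 \<le> b"
  then have "enn_powr (x * y) r = ennreal ((a * b) powr r)"
    by (simp add: enn_powr_ennreal flip: ennreal_mult)
  also have "\<dots> = ennreal (a powr r) * ennreal (b powr r)"
    using x y by (simp add: powr_mult ennreal_mult)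
  finally show ?thesis using x y by (simp add: enn_powr_ennreal)
next
  fix a assume "r > 0" and "x = ennreal a" "0 \<le> a" and "y = top"
  then show ?thesis
    by (cases "a = 0") (auto simp: enn_powr_def ennreal_mult_top ennreal_top_mult)
next
  fix b assume "r > 0" and "x = top" and "y = ennreal b" "0 \<le> b"
  then show ?thesis
    by (cases "b = 0") (auto simp: enn_powr_def ennreal_mult_top ennreal_top_mult)
next
  assume "x = top" "y = top" then show ?thesis by (simp add: enn_powr_def)
qed

lemma enn_powr_enn_powr: "r > 0 \<Longrightarrow> enn_powr (enn_powr x r) s = enn_powr x (r * s)"
  by (cases x) (auto simp: enn_powr_def powr_powr)

lemma enn_powr_add: "r > 0 \<Longrightarrow> s > 0 \<Longrightarrow> enn_powr x r * enn_powr x s = enn_powr x (r + s)"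
  by (cases x) (auto simp: enn_powr_def powr_add ennreal_mult'[symmetric])

lemma enn_powr_mono: "r > 0 \<Longrightarrow> x \<le> y \<Longrightarrow> enn_powr x r \<le> enn_powr y r"
  by (cases x; cases y) (auto simp: enn_powr_def powr_mono2 ennreal_leI top_unique)

lemma enn_powr_prod: "r > 0 \<Longrightarrow> enn_powr (\<Prod>i\<in>I. f i) r = (\<Prod>i\<in>I. enn_powr (f i) r)"
  by (induction I rule: infinite_finite_induct) (simp_all add: enn_powr_mult enn_powr_one)

lemma enn_powr_power:
  assumes r: "r > 0" and n: "n \<ge> 1"
  shows "enn_powr x r ^ n = enn_powr x (r * n)"
  using n
proof (induction n rule: nat_induct_at_least)
  case base then show ?case by simp
next
  case (Suc n)
  then have "enn_powr x r ^ Suc n = enn_powr x r * enn_powr x (r * n)" by simp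
  also have "\<dots> = enn_powr x (r + r * n)" using Suc r by (intro enn_powr_add) auto
  finally show ?case by (simp add: algebra_simps)
qed

lemma measurable_enn_powr[measurable]:
  "f \<in> borel_measurable M \<Longrightarrow> (\<lambda>x. enn_powr (f x) r) \<in> borel_measurable M"
proof -
  assume f: "f \<in> borel_measurable M"
  have s: "{x \<in> space M. f x = top} \<in> sets M"
    using measurable_sets[OF f, of "{top}"] by (simp add: vimage_def Int_def conj_commute)
  show ?thesis unfolding enn_powr_def
    by (rule measurable_If[OF measurable_const _ s]) (use f in measurable)
qed

lemma enn_powr_Young:
  assumes "0 < \<alpha>" "\<alpha> < 1"
  shows "enn_powr a \<alpha> * enn_powr b (1 - \<alpha>) \<le> ennreal \<alpha> * a + ennreal (1 - \<alpha>) * b"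
proof (cases "a = 0 \<or> b = 0")
  case True then show ?thesis by auto
next
  case False
  then have a0: "a \<noteq> 0" and b0: "b \<noteq> 0" by auto
  show ?thesis
  proof (cases "a = top \<or> b = top")
    case True
    then have "ennreal \<alpha> * a + ennreal (1 - \<alpha>) * b = top"
      using assms a0 b0 by (auto simp: ennreal_mult_top)
    then show ?thesis by (metis top_greatest)
  next
    case False
    then obtain x y where x: "a = ennreal x" "0 < x" and y: "b = ennreal y" "0 < y"
      using a0 b0 by (cases a; cases b) auto
    have "x powr \<alpha> * y powr (1 - \<alpha>) \<le> \<alpha> * x + (1 - \<alpha>) * y"
      using Youngs_inequality_0[of \<alpha> "1 - \<alpha>" x y] assms x y by auto
    then have "ennreal (x powr \<alpha> * y powr (1 - \<alpha>)) \<le> ennreal (\<alpha> * x + (1 - \<alpha>) * y)"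
      by (rule ennreal_leI)
    then show ?thesis using x y assms
      by (simp add: enn_powr_ennreal ennreal_mult ennreal_plus[symmetric])
  qed
qed

lemma enn_powr_mult_le_Young_normalized:
  fixes A B :: real
  assumes al: "0 < \<alpha>" "\<alpha> < 1" and A: "0 < A" and B: "0 < B"
  shows "enn_powr x \<alpha> * enn_powr y (1 - \<alpha>) \<le> enn_powr (ennreal A) \<alpha> * enn_powr (ennreal B) (1 - \<alpha>) *
           (ennreal \<alpha> * (x * ennreal (1 / A)) + ennreal (1 - \<alpha>) * (y * ennreal (1 / B)))"
proof -
  have scale: "z = ennreal c * (z * ennreal (1 / c))" if "0 < c" for z and c :: real
    using that by (simp add: mult.left_commute flip: ennreal_mult)
  have "enn_powr x \<alpha> * enn_powr y (1 - \<alpha>) =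
      enn_powr (ennreal A) \<alpha> * enn_powr (ennreal B) (1 - \<alpha>) *
      (enn_powr (x * ennreal (1 / A)) \<alpha> * enn_powr (y * ennreal (1 / B)) (1 - \<alpha>))"
    using scale[OF A, of x] scale[OF B, of y] al
    by (metis (no_types, lifting) diff_gt_0_iff_gt enn_powr_mult mult.assoc mult.left_commute)
  also have "\<dots> \<le> enn_powr (ennreal A) \<alpha> * enn_powr (ennreal B) (1 - \<alpha>) *
      (ennreal \<alpha> * (x * ennreal (1 / A)) + ennreal (1 - \<alpha>) * (y * ennreal (1 / B)))"
    by (intro mult_left_mono enn_powr_Young al) auto
  finally show ?thesis .
qed

lemma nn_integral_Hoelder:
  assumes f[measurable]: "f \<in> borel_measurable M" and g[measurable]: "g \<in> borel_measurable M"
    and al: "0 < \<alpha>" "\<alpha> < 1"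
  shows "(\<integral>\<^sup>+x. enn_powr (f x) \<alpha> * enn_powr (g x) (1 - \<alpha>) \<partial>M)
          \<le> enn_powr (\<integral>\<^sup>+x. f x \<partial>M) \<alpha> * enn_powr (\<integral>\<^sup>+x. g x \<partial>M) (1 - \<alpha>)"
proof -
  define A where "A = (\<integral>\<^sup>+x. f x \<partial>M)"
  define B where "B = (\<integral>\<^sup>+x. g x \<partial>M)"
  consider "A = 0 \<or> B = 0" | "A \<noteq> 0" "B \<noteq> 0" "A = top \<or> B = top"
    | a b where "A = ennreal a" "0 < a" "B = ennreal b" "0 < b"
    by (cases A; cases B) (auto simp: less_le)
  then show ?thesis
  proof cases
    case 1
    then have "AE x in M. f x = 0 \<or> g x = 0"
      using nn_integral_0_iff_AE[OF f] nn_integral_0_iff_AE[OF g] unfolding A_def B_def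
      by (auto elim: AE_mp)
    then have "(\<integral>\<^sup>+x. enn_powr (f x) \<alpha> * enn_powr (g x) (1 - \<alpha>) \<partial>M) = (\<integral>\<^sup>+x. 0 \<partial>M)"
      by (intro nn_integral_cong_AE) auto
    then show ?thesis by simp
  next
    case 2
    then have "enn_powr A \<alpha> * enn_powr B (1 - \<alpha>) = top"
      by (auto simp: enn_powr_eq_top_iff enn_powr_eq_0_iff ennreal_mult_eq_top_iff)
    then show ?thesis unfolding A_def B_def by simp
  next
    case (3 a b)
    have "(\<integral>\<^sup>+x. enn_powr (f x) \<alpha> * enn_powr (g x) (1 - \<alpha>) \<partial>M) \<le>
        (\<integral>\<^sup>+x. enn_powr A \<alpha> * enn_powr B (1 - \<alpha>) *
          (ennreal \<alpha> * (f x * ennreal (1 / a)) + ennreal (1 - \<alpha>) * (g x * ennreal (1 / b))) \<partial>M)"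
      using 3 by (intro nn_integral_mono) (simp add: enn_powr_mult_le_Young_normalized al)
    also have "\<dots> = enn_powr A \<alpha> * enn_powr B (1 - \<alpha>) *
        (ennreal \<alpha> * (A * ennreal (1 / a)) + ennreal (1 - \<alpha>) * (B * ennreal (1 / b)))"
      unfolding A_def B_def by (simp add: nn_integral_cmult nn_integral_add nn_integral_multc)
    also have "\<dots> = enn_powr A \<alpha> * enn_powr B (1 - \<alpha>)"
      using 3 al by (simp add: ennreal_mult[symmetric] ennreal_plus[symmetric] flip: ennreal_mult')
    finally show ?thesis unfolding A_def B_def .
  qed
qed

lemma nn_integral_prod_Hoelder:
  assumes "finite I" "I \<noteq> {}" "\<And>i. i \<in> I \<Longrightarrow> f i \<in> borel_measurable M"
  shows "(\<integral>\<^sup>+x. (\<Prod>i\<in>I. enn_powr (f i x) (1 / card I)) \<partial>M) \<le> (\<Prod>i\<in>I. enn_powr (\<integral>\<^sup>+x. f i x \<partial>M) (1 / card I))"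
  using assms
proof (induction I rule: finite_ne_induct)
  case (insert j I)
  define \<alpha> where "\<alpha> = 1 / real (card (insert j I))"
  define F where "F x = (\<Prod>i\<in>I. enn_powr (f i x) (1 / card I))" for x
  have card: "card (insert j I) = card I + 1" "card I \<ge> 1"
    using insert by (auto simp: Suc_le_eq card_gt_0_iff)
  have \<alpha>: "0 < \<alpha>" "\<alpha> < 1" "1 / real (card I) * (1 - \<alpha>) = \<alpha>"
    using card by (auto simp: \<alpha>_def field_simps)
  have powr_prod: "enn_powr (\<Prod>i\<in>I. enn_powr (z i) (1 / card I)) (1 - \<alpha>) = (\<Prod>i\<in>I. enn_powr (z i) \<alpha>)" for z
    using \<alpha> card by (simp add: enn_powr_prod enn_powr_enn_powr)
  have [measurable]: "f j \<in> borel_measurable M" "F \<in> borel_measurable M"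
    using insert.prems unfolding F_def by (auto intro!: borel_measurable_prod_ennreal measurable_enn_powr)
  have "(\<integral>\<^sup>+x. (\<Prod>i\<in>insert j I. enn_powr (f i x) \<alpha>) \<partial>M) = (\<integral>\<^sup>+x. enn_powr (f j x) \<alpha> * enn_powr (F x) (1 - \<alpha>) \<partial>M)"
    using insert.hyps by (simp add: F_def powr_prod)
  also have "\<dots> \<le> enn_powr (\<integral>\<^sup>+x. f j x \<partial>M) \<alpha> * enn_powr (\<integral>\<^sup>+x. F x \<partial>M) (1 - \<alpha>)"
    by (rule nn_integral_Hoelder) (use \<alpha> in auto)
  also have "\<dots> \<le> enn_powr (\<integral>\<^sup>+x. f j x \<partial>M) \<alpha> * enn_powr (\<Prod>i\<in>I. enn_powr (\<integral>\<^sup>+x. f i x \<partial>M) (1 / card I)) (1 - \<alpha>)"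
    using insert.IH insert.prems \<alpha> unfolding F_def by (intro mult_left_mono enn_powr_mono) auto
  also have "\<dots> = (\<Prod>i\<in>insert j I. enn_powr (\<integral>\<^sup>+x. f i x \<partial>M) \<alpha>)"
    using insert.hyps by (simp add: powr_prod)
  finally show ?case by (simp add: \<alpha>_def)
qed simp

section \<open>The Loomis--Whitney and Gagliardo inequalities\<close>

abbreviation PiL :: "'i set \<Rightarrow> ('i \<Rightarrow> real) measure" where
  "PiL J \<equiv> PiM J (\<lambda>_. (lborel::real measure))"

lemma measurable_PiM_restrict_extend:
  assumes "g \<in> borel_measurable (PiL J)" "\<And>x. g x = g (restrict x J)" "J \<subseteq> L"
  shows "g \<in> borel_measurable (PiL L)"
proof -
  have "(\<lambda>x. g (restrict x J)) \<in> borel_measurable (PiL L)"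
    using measurable_comp[OF measurable_restrict_subset[OF assms(3)] assms(1)] by (simp add: comp_def)
  then show ?thesis using assms(2) by simp
qed

lemma nn_integral_fibre_insert:
  assumes J: "finite J" "j \<notin> J"
    and g: "g \<in> borel_measurable (PiL (insert j J))" "\<And>x. g x = g (restrict x (insert j J))"
  shows "(\<lambda>x. \<integral>\<^sup>+t. g (x(j := t)) \<partial>lborel) \<in> borel_measurable (PiL J)"
    and "\<And>x. (\<integral>\<^sup>+t. g (x(j := t)) \<partial>lborel) = (\<integral>\<^sup>+t. g ((restrict x J)(j := t)) \<partial>lborel)"
    and "(\<integral>\<^sup>+x. (\<integral>\<^sup>+t. g (x(j := t)) \<partial>lborel) \<partial>PiL J) = (\<integral>\<^sup>+x. g x \<partial>PiL (insert j J))"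
proof -
  interpret product_sigma_finite "\<lambda>_. (lborel::real measure)" by standard
  have m: "(\<lambda>(x, t). g (x(j := t))) \<in> borel_measurable (PiL J \<Otimes>\<^sub>M lborel)"
    using measurable_comp[OF measurable_add_dim[of j J "\<lambda>_. lborel"] g(1)] by (simp add: comp_def case_prod_beta')
  show "(\<lambda>x. \<integral>\<^sup>+t. g (x(j := t)) \<partial>lborel) \<in> borel_measurable (PiL J)"
    using lborel.borel_measurable_nn_integral[of "\<lambda>x t. g (x(j := t))" "PiL J"] m by simp
  show "(\<integral>\<^sup>+t. g (x(j := t)) \<partial>lborel) = (\<integral>\<^sup>+t. g ((restrict x J)(j := t)) \<partial>lborel)" for x
  proof -
    have "restrict (x(j := t)) (insert j J) = restrict ((restrict x J)(j := t)) (insert j J)" for t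
      by (auto simp: restrict_def fun_eq_iff)
    then have "g (x(j := t)) = g ((restrict x J)(j := t))" for t using g(2) by metis
    then show ?thesis by simp
  qed
  show "(\<integral>\<^sup>+x. (\<integral>\<^sup>+t. g (x(j := t)) \<partial>lborel) \<partial>PiL J) = (\<integral>\<^sup>+x. g x \<partial>PiL (insert j J))"
    using product_nn_integral_insert[OF J g(1)] by simp
qed

lemma nn_integral_PiL_insert_factor:
  assumes I: "finite I" "j \<notin> I"
    and f: "f \<in> borel_measurable (PiL I)" "\<And>y. f y = f (restrict y I)"
    and k: "k \<in> borel_measurable (PiL (insert j I))"
  shows "(\<integral>\<^sup>+y. f y * k y \<partial>PiL (insert j I)) = (\<integral>\<^sup>+x. f x * (\<integral>\<^sup>+t. k (x(j := t)) \<partial>lborel) \<partial>PiL I)"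
proof -
  interpret product_sigma_finite "\<lambda>_. (lborel::real measure)" by standard
  have "f \<in> borel_measurable (PiL (insert j I))"
    by (rule measurable_PiM_restrict_extend[OF f(1) f(2), of "insert j I"]) auto
  then have "(\<lambda>y. f y * k y) \<in> borel_measurable (PiL (insert j I))"
    using k by (rule borel_measurable_times_ennreal)
  then have "(\<integral>\<^sup>+y. f y * k y \<partial>PiL (insert j I))
      = (\<integral>\<^sup>+x. (\<integral>\<^sup>+t. f (x(j := t)) * k (x(j := t)) \<partial>lborel) \<partial>PiL I)"
    by (rule product_nn_integral_insert[OF I])
  also have "\<dots> = (\<integral>\<^sup>+x. f x * (\<integral>\<^sup>+t. k (x(j := t)) \<partial>lborel) \<partial>PiL I)"
  proof (rule nn_integral_cong)
    fix x assume x: "x \<in> space (PiL I)"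
    have "restrict (x(j := t)) I = x" for t
      using x I by (auto simp: space_PiM PiE_def extensional_def restrict_def fun_eq_iff)
    then have "f (x(j := t)) = f x" for t using f(2) by metis
    moreover have "(\<lambda>t. k (x(j := t))) \<in> borel_measurable lborel"
      using measurable_comp[OF measurable_component_update[OF x I(2)] k] by (simp add: comp_def)
    ultimately show "(\<integral>\<^sup>+t. f (x(j := t)) * k (x(j := t)) \<partial>lborel) = f x * (\<integral>\<^sup>+t. k (x(j := t)) \<partial>lborel)"
      by (simp add: nn_integral_cmult)
  qed
  finally show ?thesis .
qed

lemma nn_integral_fibres_insert:
  assumes I: "finite I" "j \<notin> I" "i \<in> I"
    and g: "g \<in> borel_measurable (PiL (insert j I - {i}))" "\<And>x. g x = g (restrict x (insert j I - {i}))"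
  shows "(\<lambda>x. \<integral>\<^sup>+t. g (x(j := t)) \<partial>lborel) \<in> borel_measurable (PiL (I - {i}))"
    and "\<And>x. (\<integral>\<^sup>+t. g (x(j := t)) \<partial>lborel) = (\<integral>\<^sup>+t. g ((restrict x (I - {i}))(j := t)) \<partial>lborel)"
    and "(\<integral>\<^sup>+x. (\<integral>\<^sup>+t. g (x(j := t)) \<partial>lborel) \<partial>PiL (I - {i})) = (\<integral>\<^sup>+x. g x \<partial>PiL (insert j I - {i}))"
proof -
  have eq: "insert j (I - {i}) = insert j I - {i}" and fin: "finite (I - {i})" "j \<notin> I - {i}"
    using I by auto
  note fibre = nn_integral_fibre_insert[OF fin g[folded eq]]
  show "(\<lambda>x. \<integral>\<^sup>+t. g (x(j := t)) \<partial>lborel) \<in> borel_measurable (PiL (I - {i}))"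
    by (rule fibre(1))
  show "\<And>x. (\<integral>\<^sup>+t. g (x(j := t)) \<partial>lborel) = (\<integral>\<^sup>+t. g ((restrict x (I - {i}))(j := t)) \<partial>lborel)"
    by (rule fibre(2))
  show "(\<integral>\<^sup>+x. (\<integral>\<^sup>+t. g (x(j := t)) \<partial>lborel) \<partial>PiL (I - {i})) = (\<integral>\<^sup>+x. g x \<partial>PiL (insert j I - {i}))"
    using fibre(3) unfolding eq .
qed

lemma Loomis_Whitney_two:
  assumes "a \<noteq> j"
    and g_meas: "\<And>i. i \<in> {j, a} \<Longrightarrow> g i \<in> borel_measurable (PiL ({j, a} - {i}))"
    and g_dep: "\<And>i x. i \<in> {j, a} \<Longrightarrow> g i x = g i (restrict x ({j, a} - {i}))"
  shows "(\<integral>\<^sup>+x. g j x * g a x \<partial>PiL {j, a})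
          = (\<integral>\<^sup>+x. g j x \<partial>PiL {a}) * (\<integral>\<^sup>+x. g a x \<partial>PiL {j})"
proof -
  have I: "finite {a}" "j \<notin> {a}" "a \<in> {a}" and aj: "{j, a} - {j} = {a}"
    using assms(1) by auto
  have ga: "g a \<in> borel_measurable (PiL (insert j {a} - {a}))"
    "\<And>x. g a x = g a (restrict x (insert j {a} - {a}))"
    using g_meas[of a] g_dep[of a] by blast+
  have gj: "g j \<in> borel_measurable (PiL {a})" "\<And>y. g j y = g j (restrict y {a})"
    using g_meas[of j] g_dep[of j] unfolding aj by blast+
  note fibre = nn_integral_fibres_insert[OF I ga]
  define c where "c = (\<integral>\<^sup>+t. g a ((\<lambda>_. undefined)(j := t)) \<partial>lborel)"
  have inner: "(\<integral>\<^sup>+t. g a (x(j := t)) \<partial>lborel) = c" for x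
  proof -
    have "restrict x ({a} - {a}) = (\<lambda>_. undefined)" by (auto simp: restrict_def)
    then show ?thesis using fibre(2)[of x] unfolding c_def by metis
  qed
  have "(\<integral>\<^sup>+x. g j x * g a x \<partial>PiL {j, a}) = (\<integral>\<^sup>+x. g j x * (\<integral>\<^sup>+t. g a (x(j := t)) \<partial>lborel) \<partial>PiL {a})"
    by (rule nn_integral_PiL_insert_factor[OF I(1,2) gj measurable_PiM_restrict_extend[OF ga]]) auto
  also have "\<dots> = (\<integral>\<^sup>+x. g j x \<partial>PiL {a}) * c"
    by (simp only: inner nn_integral_multc[OF gj(1)])
  also have "c = (\<integral>\<^sup>+x. g a x \<partial>PiL {j})"
  proof -
    have "(\<integral>\<^sup>+x. g a x \<partial>PiL {j}) = (\<integral>\<^sup>+x. c \<partial>PiL ({a} - {a}))"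
      using fibre(3) by (simp only: inner insert_Diff_if I(2)) (simp add: assms(1))
    then show ?thesis by (simp add: PiM_empty nn_integral_count_space_finite)
  qed
  finally show ?thesis .
qed

text \<open>The induction step: integrate out the new coordinate with the generalised Hoelder inequality,
  then apply Hoelder in the remaining variables and the induction hypothesis to the fibre integrals.\<close>
lemma Loomis_Whitney_insert:
  assumes I: "finite I" "j \<notin> I" "2 \<le> card I"
    and IH: "\<And>h. (\<And>i. i \<in> I \<Longrightarrow> h i \<in> borel_measurable (PiL (I - {i}))) \<Longrightarrow>
               (\<And>i x. i \<in> I \<Longrightarrow> h i x = h i (restrict x (I - {i}))) \<Longrightarrow>
               (\<integral>\<^sup>+x. (\<Prod>i\<in>I. enn_powr (h i x) (1 / (real (card I) - 1))) \<partial>PiL I)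
                 \<le> (\<Prod>i\<in>I. enn_powr (\<integral>\<^sup>+x. h i x \<partial>PiL (I - {i})) (1 / (real (card I) - 1)))"
    and g_meas: "\<And>i. i \<in> insert j I \<Longrightarrow> g i \<in> borel_measurable (PiL (insert j I - {i}))"
    and g_dep: "\<And>i x. i \<in> insert j I \<Longrightarrow> g i x = g i (restrict x (insert j I - {i}))"
  shows "(\<integral>\<^sup>+x. (\<Prod>i\<in>insert j I. enn_powr (g i x) (1 / real (card I))) \<partial>PiL (insert j I))
          \<le> (\<Prod>i\<in>insert j I. enn_powr (\<integral>\<^sup>+x. g i x \<partial>PiL (insert j I - {i})) (1 / real (card I)))"
proof -
  define E where "E = 1 / real (card I)"
  define h where "h i = (\<lambda>x. \<integral>\<^sup>+t. g i (x(j := t)) \<partial>lborel)" for i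
  define K where "K x = (\<Prod>i\<in>I. enn_powr (h i x) (1 / (real (card I) - 1)))" for x
  have E: "0 < E" "E < 1"
    and E_conj: "1 / (real (card I) - 1) * (1 - E) = E" "(1 - E) / (real (card I) - 1) = E"
    using I(3) by (auto simp: E_def field_simps)
  have IjI: "insert j I - {j} = I" using I by auto
  have gj: "g j \<in> borel_measurable (PiL I)" "\<And>y. g j y = g j (restrict y I)"
    using g_meas[of j] g_dep[of j] unfolding IjI by blast+
  have g_ext: "g i \<in> borel_measurable (PiL (insert j I))" if "i \<in> insert j I" for i
    by (rule measurable_PiM_restrict_extend[OF g_meas[OF that] g_dep[OF that], of "insert j I"]) auto
  have h: "h i \<in> borel_measurable (PiL (I - {i}))" "\<And>x. h i x = h i (restrict x (I - {i}))"
    "(\<integral>\<^sup>+x. h i x \<partial>PiL (I - {i})) = (\<integral>\<^sup>+x. g i x \<partial>PiL (insert j I - {i}))" if i: "i \<in> I" for i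
    unfolding h_def
    by (fact nn_integral_fibres_insert[OF I(1,2) i g_meas[OF insertI2[OF i]] g_dep[OF insertI2[OF i]]])+
  have h_ext: "h i \<in> borel_measurable (PiL I)" if "i \<in> I" for i
    by (rule measurable_PiM_restrict_extend[OF h(1)[OF that] h(2)[OF that], of I]) auto
  have K_meas: "K \<in> borel_measurable (PiL I)" unfolding K_def
    using h_ext by (intro borel_measurable_prod_ennreal measurable_enn_powr) auto
  have fibre_Hoelder: "(\<integral>\<^sup>+t. (\<Prod>i\<in>I. enn_powr (g i (x(j := t))) E) \<partial>lborel) \<le> enn_powr (K x) (1 - E)"
    if x: "x \<in> space (PiL I)" for x
  proof -
    have "(\<lambda>t. g i (x(j := t))) \<in> borel_measurable lborel" if "i \<in> I" for i
      using measurable_comp[OF measurable_component_update[OF x I(2)] g_ext] that by (simp add: comp_def)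
    then have "(\<integral>\<^sup>+t. (\<Prod>i\<in>I. enn_powr (g i (x(j := t))) E) \<partial>lborel) \<le> (\<Prod>i\<in>I. enn_powr (h i x) E)"
      using nn_integral_prod_Hoelder[of I "\<lambda>i t. g i (x(j := t))" lborel] I unfolding h_def E_def
      by (metis card.empty not_numeral_le_zero)
    also have "\<dots> = enn_powr (K x) (1 - E)"
      unfolding K_def using E I(3) by (simp add: enn_powr_prod enn_powr_enn_powr E_conj)
    finally show ?thesis .
  qed
  have "(\<integral>\<^sup>+x. (\<Prod>i\<in>insert j I. enn_powr (g i x) E) \<partial>PiL (insert j I))
      = (\<integral>\<^sup>+x. enn_powr (g j x) E * (\<Prod>i\<in>I. enn_powr (g i x) E) \<partial>PiL (insert j I))"
    using I(1,2) by simp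
  also have "\<dots> = (\<integral>\<^sup>+x. enn_powr (g j x) E * (\<integral>\<^sup>+t. (\<Prod>i\<in>I. enn_powr (g i (x(j := t))) E) \<partial>lborel) \<partial>PiL I)"
  proof (rule nn_integral_PiL_insert_factor[OF I(1,2)])
    show "(\<lambda>y. enn_powr (g j y) E) \<in> borel_measurable (PiL I)" by (rule measurable_enn_powr[OF gj(1)])
    show "enn_powr (g j y) E = enn_powr (g j (restrict y I)) E" for y by (rule arg_cong[OF gj(2)])
    show "(\<lambda>y. \<Prod>i\<in>I. enn_powr (g i y) E) \<in> borel_measurable (PiL (insert j I))"
      using g_ext by (intro borel_measurable_prod_ennreal measurable_enn_powr) auto
  qed
  also have "\<dots> \<le> (\<integral>\<^sup>+x. enn_powr (g j x) E * enn_powr (K x) (1 - E) \<partial>PiL I)"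
    by (intro nn_integral_mono mult_left_mono fibre_Hoelder) auto
  also have "\<dots> \<le> enn_powr (\<integral>\<^sup>+x. g j x \<partial>PiL I) E * enn_powr (\<integral>\<^sup>+x. K x \<partial>PiL I) (1 - E)"
    by (rule nn_integral_Hoelder[OF gj(1) K_meas E])
  also have "\<dots> \<le> enn_powr (\<integral>\<^sup>+x. g j x \<partial>PiL I) E *
      enn_powr (\<Prod>i\<in>I. enn_powr (\<integral>\<^sup>+x. h i x \<partial>PiL (I - {i})) (1 / (real (card I) - 1))) (1 - E)"
    unfolding K_def using IH[of h, OF h(1) h(2)] E by (intro mult_left_mono enn_powr_mono) auto
  also have "\<dots> = (\<Prod>i\<in>insert j I. enn_powr (\<integral>\<^sup>+x. g i x \<partial>PiL (insert j I - {i})) E)"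
    using E I h(3) by (simp add: IjI enn_powr_prod enn_powr_enn_powr E_conj)
  finally show ?thesis unfolding E_def .
qed

lemma Loomis_Whitney:
  fixes g :: "'i \<Rightarrow> ('i \<Rightarrow> real) \<Rightarrow> ennreal"
  assumes "finite I" "2 \<le> card I"
    "\<And>i. i \<in> I \<Longrightarrow> g i \<in> borel_measurable (PiL (I - {i}))"
    "\<And>i x. i \<in> I \<Longrightarrow> g i x = g i (restrict x (I - {i}))"
  shows "(\<integral>\<^sup>+x. (\<Prod>i\<in>I. enn_powr (g i x) (1 / (real (card I) - 1))) \<partial>PiL I)
          \<le> (\<Prod>i\<in>I. enn_powr (\<integral>\<^sup>+x. g i x \<partial>PiL (I - {i})) (1 / (real (card I) - 1)))"
  using assms
proof (induction I arbitrary: g rule: finite_induct)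
  case (insert j I)
  show ?case
  proof (cases "card I = 1")
    case True
    then obtain a where I: "I = {a}" by (rule card_1_singletonE)
    then have "a \<noteq> j" using insert.hyps by auto
    have e: "1 / (real (card (insert j {a})) - 1) = 1"
      and d: "insert j {a} - {j} = {a}" "insert j {a} - {a} = {j}"
      using I \<open>a \<noteq> j\<close> by auto
    have prod2: "(\<Prod>i\<in>insert j {a}. f i) = f j * f a" for f :: "'i \<Rightarrow> ennreal"
      using \<open>a \<noteq> j\<close> by simp
    show ?thesis unfolding e I prod2 enn_powr_1 d
      by (rule eq_refl[OF Loomis_Whitney_two[of a j g, OF \<open>a \<noteq> j\<close> insert.prems(2,3)[unfolded I]]])
  next
    case False
    then have c2: "2 \<le> card I" using insert.prems(1) insert.hyps by auto
    have IH: "\<And>h. (\<And>i. i \<in> I \<Longrightarrow> h i \<in> borel_measurable (PiL (I - {i}))) \<Longrightarrow>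
        (\<And>i x. i \<in> I \<Longrightarrow> h i x = h i (restrict x (I - {i}))) \<Longrightarrow>
        (\<integral>\<^sup>+x. (\<Prod>i\<in>I. enn_powr (h i x) (1 / (real (card I) - 1))) \<partial>PiL I)
          \<le> (\<Prod>i\<in>I. enn_powr (\<integral>\<^sup>+x. h i x \<partial>PiL (I - {i})) (1 / (real (card I) - 1)))"
      by (rule insert.IH[OF c2])
    have e: "1 / (real (card (insert j I)) - 1) = 1 / real (card I)" using insert.hyps by simp
    show ?thesis
      unfolding e by (rule Loomis_Whitney_insert[of I j g, OF insert.hyps(1,2) c2 IH insert.prems(2,3)])
  qed
qed simp

definition euclidean_of_coords :: "('a::euclidean_space \<Rightarrow> real) \<Rightarrow> 'a" where
  "euclidean_of_coords x = (\<Sum>b\<in>Basis. x b *\<^sub>R b)"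

lemma euclidean_of_coords_restrict: "euclidean_of_coords (restrict x Basis) = euclidean_of_coords x"
  by (simp add: euclidean_of_coords_def restrict_def)

lemma euclidean_of_coords_fun_upd:
  assumes b: "b \<in> Basis"
  shows "euclidean_of_coords (x(b := t)) = euclidean_of_coords x + (t - x b) *\<^sub>R b"
proof -
  have "euclidean_of_coords (x(b := t)) = t *\<^sub>R b + (\<Sum>c\<in>Basis - {b}. x c *\<^sub>R c)"
    and "euclidean_of_coords x = x b *\<^sub>R b + (\<Sum>c\<in>Basis - {b}. x c *\<^sub>R c)"
    using b by (simp_all add: euclidean_of_coords_def sum.remove[of Basis b])
  then show ?thesis by (simp add: algebra_simps)
qed

lemma measurable_euclidean_of_coords[measurable]:
  "euclidean_of_coords \<in> borel_measurable (PiL (Basis :: 'a::euclidean_space set))"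
  unfolding euclidean_of_coords_def by measurable

lemma nn_integral_lborel_eq_PiL:
  fixes F :: "'a::euclidean_space \<Rightarrow> ennreal"
  assumes "F \<in> borel_measurable borel"
  shows "(\<integral>\<^sup>+y. F y \<partial>lborel) = (\<integral>\<^sup>+x. F (euclidean_of_coords x) \<partial>PiL Basis)"
proof -
  have lb: "lborel = distr (PiL Basis) borel (euclidean_of_coords :: _ \<Rightarrow> 'a)"
    unfolding euclidean_of_coords_def by (rule lborel_eq)
  show ?thesis
    by (subst lb) (simp add: nn_integral_distr assms)
qed

lemma nn_integral_line_eq_coordinate:
  assumes d: "d \<in> borel_measurable borel" and b: "b \<in> Basis"
  shows "(\<integral>\<^sup>+s. d (euclidean_of_coords x + s *\<^sub>R b) \<partial>lborel)
          = (\<integral>\<^sup>+t. d (euclidean_of_coords (x(b := t))) \<partial>lborel)"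
proof -
  have "(\<lambda>s. d (euclidean_of_coords x + s *\<^sub>R b)) \<in> borel_measurable borel"
    using d by measurable
  from nn_integral_real_affine[OF this, of 1 "- x b"] show ?thesis
    by (simp add: euclidean_of_coords_fun_upd[OF b])
qed

lemma nn_integral_line_fibres:
  fixes d :: "'a::euclidean_space \<Rightarrow> ennreal"
  assumes d: "d \<in> borel_measurable borel" and b: "b \<in> Basis"
  shows "(\<lambda>x. \<integral>\<^sup>+t. d (euclidean_of_coords (x(b := t))) \<partial>lborel) \<in> borel_measurable (PiL (Basis - {b}))"
    and "\<And>x. (\<integral>\<^sup>+t. d (euclidean_of_coords (x(b := t))) \<partial>lborel)
              = (\<integral>\<^sup>+t. d (euclidean_of_coords ((restrict x (Basis - {b}))(b := t))) \<partial>lborel)"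
    and "(\<integral>\<^sup>+x. (\<integral>\<^sup>+t. d (euclidean_of_coords (x(b := t))) \<partial>lborel) \<partial>PiL (Basis - {b}))
          = (\<integral>\<^sup>+y. d y \<partial>lborel)"
proof -
  have B: "insert b (Basis - {b}) = Basis" and fin: "finite (Basis - {b})" "b \<notin> Basis - {b}"
    using b by auto
  have m: "(\<lambda>x. d (euclidean_of_coords x)) \<in> borel_measurable (PiL (insert b (Basis - {b})))"
    unfolding B using d by measurable
  have dep: "d (euclidean_of_coords x) = d (euclidean_of_coords (restrict x (insert b (Basis - {b}))))" for x
    unfolding B euclidean_of_coords_restrict ..
  note fibre = nn_integral_fibre_insert[OF fin m dep]
  show "(\<lambda>x. \<integral>\<^sup>+t. d (euclidean_of_coords (x(b := t))) \<partial>lborel) \<in> borel_measurable (PiL (Basis - {b}))"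
    and "\<And>x. (\<integral>\<^sup>+t. d (euclidean_of_coords (x(b := t))) \<partial>lborel)
              = (\<integral>\<^sup>+t. d (euclidean_of_coords ((restrict x (Basis - {b}))(b := t))) \<partial>lborel)"
    using fibre by blast+
  show "(\<integral>\<^sup>+x. (\<integral>\<^sup>+t. d (euclidean_of_coords (x(b := t))) \<partial>lborel) \<partial>PiL (Basis - {b}))
          = (\<integral>\<^sup>+y. d y \<partial>lborel)"
    using fibre(3) nn_integral_lborel_eq_PiL[OF d] unfolding B by (simp only:)
qed

lemma Gagliardo_inequality:
  fixes k :: "'a::euclidean_space \<Rightarrow> real" and d :: "'a \<Rightarrow> 'a \<Rightarrow> ennreal"
  assumes N: "DIM('a) \<ge> 2"
    and k: "k \<in> borel_measurable borel"
    and d: "\<And>b. b \<in> Basis \<Longrightarrow> d b \<in> borel_measurable borel"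
    and line_bound: "\<And>y b. b \<in> Basis \<Longrightarrow> ennreal \<bar>k y\<bar> \<le> (\<integral>\<^sup>+t. d b (y + t *\<^sub>R b) \<partial>lborel)"
  shows "(\<integral>\<^sup>+y. ennreal (\<bar>k y\<bar> powr (real DIM('a) / (real DIM('a) - 1))) \<partial>lborel)
         \<le> (\<Prod>b\<in>Basis. enn_powr (\<integral>\<^sup>+y. d b y \<partial>lborel) (1 / (real DIM('a) - 1)))"
proof -
  define E where "E = 1 / (real DIM('a) - 1)"
  define g where "g b = (\<lambda>x. \<integral>\<^sup>+t. d b (euclidean_of_coords (x(b := t))) \<partial>lborel)" for b
  have fibres: "g b \<in> borel_measurable (PiL (Basis - {b}))" "\<And>x. g b x = g b (restrict x (Basis - {b}))"
      "(\<integral>\<^sup>+x. g b x \<partial>PiL (Basis - {b})) = (\<integral>\<^sup>+y. d b y \<partial>lborel)" if b: "b \<in> Basis" for b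
    unfolding g_def by (fact nn_integral_line_fibres[OF d[OF b] b])+
  have E: "E > 0" "E * DIM('a) = real DIM('a) / (real DIM('a) - 1)" using N by (auto simp: E_def)
  have pointwise: "ennreal (\<bar>k (euclidean_of_coords x)\<bar> powr (real DIM('a) / (real DIM('a) - 1)))
      \<le> (\<Prod>b\<in>Basis. enn_powr (g b x) E)" for x
  proof -
    have "(\<Prod>b\<in>(Basis::'a set). enn_powr c E) = enn_powr c (E * DIM('a))" for c
      using E(1) N by (simp add: enn_powr_power del: enn_powr_ennreal)
    from this[of "ennreal \<bar>k (euclidean_of_coords x)\<bar>"]
    have "ennreal (\<bar>k (euclidean_of_coords x)\<bar> powr (real DIM('a) / (real DIM('a) - 1)))
        = (\<Prod>b\<in>(Basis::'a set). enn_powr (ennreal \<bar>k (euclidean_of_coords x)\<bar>) E)"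
      by (simp only: E(2) enn_powr_ennreal abs_ge_zero)
    also have "\<dots> \<le> (\<Prod>b\<in>Basis. enn_powr (g b x) E)"
      using line_bound[of _ "euclidean_of_coords x"]
      by (intro prod_mono_ennreal enn_powr_mono[OF E(1)]) (simp add: g_def nn_integral_line_eq_coordinate d)
    finally show ?thesis .
  qed
  have "(\<integral>\<^sup>+y. ennreal (\<bar>k y\<bar> powr (real DIM('a) / (real DIM('a) - 1))) \<partial>lborel)
      = (\<integral>\<^sup>+x. ennreal (\<bar>k (euclidean_of_coords x)\<bar> powr (real DIM('a) / (real DIM('a) - 1))) \<partial>PiL Basis)"
    using k by (intro nn_integral_lborel_eq_PiL) measurable
  also have "\<dots> \<le> (\<integral>\<^sup>+x. (\<Prod>b\<in>Basis. enn_powr (g b x) E) \<partial>PiL Basis)"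
    by (intro nn_integral_mono pointwise)
  also have "\<dots> \<le> (\<Prod>b\<in>Basis. enn_powr (\<integral>\<^sup>+x. g b x \<partial>PiL (Basis - {b})) E)"
    unfolding E_def
  proof (rule Loomis_Whitney)
    show "finite (Basis :: 'a set)" "2 \<le> card (Basis :: 'a set)" using N by auto
    show "g b \<in> borel_measurable (PiL (Basis - {b}))" if "b \<in> Basis" for b
      using that by (rule fibres(1))
    show "g b x = g b (restrict x (Basis - {b}))" if "b \<in> Basis" for b x
      using that by (rule fibres(2))
  qed
  also have "\<dots> = (\<Prod>b\<in>Basis. enn_powr (\<integral>\<^sup>+y. d b y \<partial>lborel) E)"
    using fibres(3) by simp
  finally show ?thesis by (simp add: E_def)
qed

section \<open>The Sobolev inequality for compactly supported \<open>C\<^sup>1\<close> functions\<close>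

definition signed_powr :: "real \<Rightarrow> real \<Rightarrow> real" where
  "signed_powr a z = sgn z * \<bar>z\<bar> powr a"

lemma abs_powr_divide_self: "(z::real) \<noteq> 0 \<Longrightarrow> \<bar>z\<bar> powr g / \<bar>z\<bar> = \<bar>z\<bar> powr (g - 1)"
  by (simp add: powr_diff[of "\<bar>z\<bar>" g 1])

lemma tendsto_abs_powr_0:
  assumes "a > 0"
  shows "((\<lambda>y::real. \<bar>y\<bar> powr a) \<longlongrightarrow> 0) (at 0)"
proof -
  have "((\<lambda>y::real. \<bar>y\<bar>) \<longlongrightarrow> 0) (at 0)"
    using tendsto_rabs[OF tendsto_ident_at[of 0 UNIV]] by simp
  then show ?thesis
    by (rule tendsto_zero_powrI) (use assms in auto)
qed

lemma has_real_derivative_abs_powr: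
  fixes g :: real
  assumes g: "g > 1"
  shows "((\<lambda>z. \<bar>z\<bar> powr g) has_real_derivative (g * signed_powr (g - 1) z)) (at z)"
proof (cases "z = 0")
  case True
  have "((\<lambda>y. (\<bar>y\<bar> powr g - \<bar>0\<bar> powr g) / (y - 0)) \<longlongrightarrow> 0) (at (0::real))"
  proof (rule Lim_null_comparison)
    show "\<forall>\<^sub>F x in at 0. norm ((\<bar>x\<bar> powr g - \<bar>0\<bar> powr g) / (x - 0)) \<le> \<bar>x\<bar> powr (g - 1)"
      unfolding eventually_at_filter
      by (auto intro!: always_eventually simp: abs_powr_divide_self abs_divide)
    show "((\<lambda>y::real. \<bar>y\<bar> powr (g - 1)) \<longlongrightarrow> 0) (at 0)"
      using g by (intro tendsto_abs_powr_0) auto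
  qed
  then show ?thesis using True
    by (simp add: has_field_derivative_iff signed_powr_def)
next
  case False
  show ?thesis
  proof (cases "z > 0")
    case True
    have ev: "eventually (\<lambda>w. \<bar>w\<bar> powr g = w powr g) (nhds z)"
      using order_tendstoD(1)[OF filterlim_ident True] by eventually_elim auto
    show ?thesis
      by (subst DERIV_cong_ev[OF refl ev refl])
         (use True in \<open>auto intro!: derivative_eq_intros simp: signed_powr_def\<close>)
  next
    case False
    with \<open>z \<noteq> 0\<close> have z: "z < 0" by simp
    have ev: "eventually (\<lambda>w. \<bar>w\<bar> powr g = (- w) powr g) (nhds z)"
      using order_tendstoD(2)[OF filterlim_ident z] by eventually_elim auto
    have d: "((\<lambda>w. (- w) powr g) has_real_derivative (g * (- z) powr (g - 1) * (-1))) (at z)"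
      using z by (auto intro!: derivative_eq_intros)
    show ?thesis
      by (subst DERIV_cong_ev[OF refl ev refl]) (use d z in \<open>simp add: signed_powr_def\<close>)
  qed
qed

lemma continuous_on_signed_powr:
  assumes a: "a > 0"
  shows "continuous_on UNIV (signed_powr a)"
proof -
  have "isCont (signed_powr a) z" for z
  proof (cases "z = 0")
    case True
    have "((\<lambda>y. signed_powr a y) \<longlongrightarrow> 0) (at 0)"
    proof (rule Lim_null_comparison)
      show "\<forall>\<^sub>F x in at 0. norm (signed_powr a x) \<le> \<bar>x\<bar> powr a"
        by (auto intro!: always_eventually simp: signed_powr_def abs_mult sgn_if)
      show "((\<lambda>y::real. \<bar>y\<bar> powr a) \<longlongrightarrow> 0) (at 0)" using a by (rule tendsto_abs_powr_0)
    qed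
    then show ?thesis using True by (simp add: isCont_def signed_powr_def[abs_def])
  next
    case False
    then show ?thesis unfolding signed_powr_def
      by (auto intro!: continuous_intros)
  qed
  then show ?thesis by (simp add: continuous_at_imp_continuous_on)
qed

lemma abs_le_nn_integral_derivative:
  fixes f f' :: "real \<Rightarrow> real"
  assumes d: "\<And>t. (f has_real_derivative f' t) (at t)"
    and c: "continuous_on UNIV f'"
    and z: "\<And>t. t \<le> - R \<Longrightarrow> f t = 0" and R: "R \<ge> 0"
  shows "ennreal \<bar>f 0\<bar> \<le> (\<integral>\<^sup>+t. ennreal \<bar>f' t\<bar> \<partial>lborel)"
proof -
  have "(f' has_integral (f 0 - f (- R))) {- R..0}"
    using R d by (intro fundamental_theorem_of_calculus)
      (auto simp: has_real_derivative_iff_has_vector_derivative[symmetric] intro: has_field_derivative_at_within)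
  then have I: "(f' has_integral f 0) {- R..0}" using z[of "- R"] by simp
  have ci: "continuous_on {- R..0} (\<lambda>t. \<bar>f' t\<bar>)"
    using c by (auto intro!: continuous_intros intro: continuous_on_subset)
  have ai: "(\<lambda>t. \<bar>f' t\<bar>) integrable_on {- R..0}"
    by (rule integrable_continuous_interval[OF ci])
  have "\<bar>f 0\<bar> \<le> integral {- R..0} (\<lambda>t. \<bar>f' t\<bar>)"
    using integral_norm_bound_integral[OF has_integral_integrable[OF I] ai] I
    by (auto simp: integral_unique)
  also have "ennreal (integral {- R..0} (\<lambda>t. \<bar>f' t\<bar>)) = (\<integral>\<^sup>+t. indicator {- R..0} t * \<bar>f' t\<bar> \<partial>lborel)"
    by (rule nn_integral_has_integral_lebesgue[symmetric]) (auto intro: integrable_integral[OF ai])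
  finally have "ennreal \<bar>f 0\<bar> \<le> (\<integral>\<^sup>+t. indicator {- R..0} t * \<bar>f' t\<bar> \<partial>lborel)"
    by (simp add: ennreal_leI)
  also have "\<dots> \<le> (\<integral>\<^sup>+t. ennreal \<bar>f' t\<bar> \<partial>lborel)"
    by (intro nn_integral_mono) (auto simp: indicator_def)
  finally show ?thesis .
qed

definition C1c :: "(real^'n::finite \<Rightarrow> real) \<Rightarrow> bool" where
  "C1c \<phi> \<longleftrightarrow> (\<forall>x. \<phi> differentiable (at x)) \<and> (\<forall>i. continuous_on UNIV (partial i \<phi>))
     \<and> (\<exists>R. \<forall>x. R \<le> norm x \<longrightarrow> \<phi> x = 0)"

lemma Cc_inf_imp_C1c:
  assumes "\<phi> \<in> Cc_inf \<Omega>"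
  shows "C1c \<phi>"
proof -
  have C: "C_inf_on UNIV \<phi>" and K: "compact (closure {x. \<phi> x \<noteq> 0})"
    using assms by (auto simp: Cc_inf_def)
  have d0: "iter_partial [] \<phi> differentiable_on UNIV" using C unfolding C_inf_on_def by blast
  then have d: "\<phi> differentiable (at x)" for x
    by (simp add: differentiable_on_eq_differentiable_at)
  have "iter_partial [i] \<phi> differentiable_on UNIV" for i using C by (simp only: C_inf_on_def)
  then have c: "continuous_on UNIV (partial i \<phi>)" for i
    by (simp add: differentiable_imp_continuous_on)
  have "bounded {x. \<phi> x \<noteq> 0}"
    using compact_imp_bounded[OF K] bounded_subset closure_subset by blast
  then obtain B where B: "\<And>x. \<phi> x \<noteq> 0 \<Longrightarrow> norm x \<le> B" by (auto simp: bounded_iff)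
  have "\<forall>x. B + 1 \<le> norm x \<longrightarrow> \<phi> x = 0" using B by force
  then show ?thesis using d c unfolding C1c_def by blast
qed

lemma has_real_derivative_on_line:
  fixes \<phi> :: "'a::real_normed_vector \<Rightarrow> real"
  assumes d: "\<And>x. \<phi> differentiable (at x)"
  shows "((\<lambda>s. \<phi> (x + s *\<^sub>R v)) has_real_derivative frechet_derivative \<phi> (at (x + t *\<^sub>R v)) v) (at t)"
proof -
  let ?D = "frechet_derivative \<phi> (at (x + t *\<^sub>R v))"
  have D: "(\<phi> has_derivative ?D) (at (x + t *\<^sub>R v))"
    using d frechet_derivative_works by blast
  have l: "((\<lambda>s. x + s *\<^sub>R v) has_derivative (\<lambda>h. h *\<^sub>R v)) (at t)"
    by (auto intro!: derivative_eq_intros)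
  have "((\<lambda>s. \<phi> (x + s *\<^sub>R v)) has_derivative (\<lambda>h. ?D (h *\<^sub>R v))) (at t)"
    using diff_chain_at[OF l D] by (simp add: comp_def)
  moreover have "(\<lambda>h. ?D (h *\<^sub>R v)) = (*) (?D v)"
    using linear_scale[OF has_derivative_linear[OF D]] by (auto simp: fun_eq_iff)
  ultimately show ?thesis unfolding has_field_derivative_def by metis
qed

lemma partial_eq_frechet:
  fixes \<phi> :: "real^'n::finite \<Rightarrow> real"
  assumes d: "\<And>x. \<phi> differentiable (at x)"
  shows "partial i \<phi> y = frechet_derivative \<phi> (at y) (axis i 1)"
  unfolding partial_def
  using DERIV_imp_deriv[OF has_real_derivative_on_line[OF d, of y "axis i 1" 0]] by simp

lemma has_real_derivative_partial:
  fixes \<phi> :: "real^'n::finite \<Rightarrow> real"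
  assumes d: "\<And>x. \<phi> differentiable (at x)"
  shows "((\<lambda>s. \<phi> (x + s *\<^sub>R axis i 1)) has_real_derivative partial i \<phi> (x + t *\<^sub>R axis i 1)) (at t)"
  using has_real_derivative_on_line[OF d, of x "axis i 1" t] partial_eq_frechet[OF d] by simp

lemma C1c_continuous_on:
  "C1c \<phi> \<Longrightarrow> continuous_on UNIV \<phi>"
  unfolding C1c_def by (meson continuous_at_imp_continuous_on differentiable_imp_continuous_within)

lemma C1c_grad_continuous_on:
  "C1c \<phi> \<Longrightarrow> continuous_on UNIV (grad \<phi>)"
  unfolding C1c_def grad_def
  by (auto intro!: continuous_on_vec_lambda)

lemma Basis_vec_eq_axis: "b \<in> (Basis :: (real^'n::finite) set) \<Longrightarrow> \<exists>i. b = axis i 1"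
  by (auto simp: Basis_vec_def)

lemma abs_signed_powr_le: "\<bar>signed_powr a z\<bar> \<le> \<bar>z\<bar> powr a"
  by (auto simp: signed_powr_def abs_mult sgn_if)

lemma C1c_abs_powr_le_line_integral:
  fixes \<phi> :: "real^'n::finite \<Rightarrow> real"
  assumes sc: "C1c \<phi>" and g: "\<gamma> > 1" and b: "b \<in> Basis"
  shows "ennreal \<bar>\<bar>\<phi> y\<bar> powr \<gamma>\<bar> \<le>
    (\<integral>\<^sup>+t. ennreal (\<gamma> * \<bar>\<phi> (y + t *\<^sub>R b)\<bar> powr (\<gamma> - 1) * norm (grad \<phi> (y + t *\<^sub>R b))) \<partial>lborel)"
proof -
  obtain i where bi: "b = axis i 1" using Basis_vec_eq_axis[OF b] by blast
  have d: "\<And>x. \<phi> differentiable (at x)" and ci: "continuous_on UNIV (partial i \<phi>)"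
    and "\<exists>R. \<forall>x. R \<le> norm x \<longrightarrow> \<phi> x = 0" using sc unfolding C1c_def by blast+
  then obtain R where R: "\<And>x. R \<le> norm x \<Longrightarrow> \<phi> x = 0" by blast
  define f where "f t = \<bar>\<phi> (y + t *\<^sub>R b)\<bar> powr \<gamma>" for t
  define f' where "f' t = \<gamma> * signed_powr (\<gamma> - 1) (\<phi> (y + t *\<^sub>R b)) * partial i \<phi> (y + t *\<^sub>R b)" for t
  have fd: "(f has_real_derivative f' t) (at t)" for t
    unfolding f_def f'_def bi
    using DERIV_chain2[OF has_real_derivative_abs_powr[OF g] has_real_derivative_partial[OF d, of y i t]] by (simp add: mult.assoc)
  have lc: "continuous_on UNIV (\<lambda>t::real. y + t *\<^sub>R b)" by (intro continuous_intros)
  have c1: "continuous_on UNIV (\<lambda>t. \<phi> (y + t *\<^sub>R b))"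
    using continuous_on_compose2[OF C1c_continuous_on[OF sc] lc] by simp
  have c2: "continuous_on UNIV (\<lambda>t. partial i \<phi> (y + t *\<^sub>R b))"
    using continuous_on_compose2[OF ci lc] by simp
  have c3: "continuous_on UNIV (\<lambda>t. signed_powr (\<gamma> - 1) (\<phi> (y + t *\<^sub>R b)))"
    using continuous_on_compose2[OF continuous_on_signed_powr c1] g by simp
  have fc: "continuous_on UNIV f'" unfolding f'_def
    by (intro continuous_intros c2 c3)
  have fz: "f t = 0" if "t \<le> - (\<bar>R\<bar> + norm y)" for t
  proof -
    have "norm (t *\<^sub>R b) \<le> norm (y + t *\<^sub>R b) + norm y"
      by (metis add_diff_cancel_left' norm_triangle_ineq4 add.commute)
    then have "\<bar>t\<bar> \<le> norm (y + t *\<^sub>R b) + norm y" using bi by simp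
    then have "R \<le> norm (y + t *\<^sub>R b)" using that by linarith
    then show ?thesis using R unfolding f_def by simp
  qed
  have "ennreal \<bar>f 0\<bar> \<le> (\<integral>\<^sup>+t. ennreal \<bar>f' t\<bar> \<partial>lborel)"
    by (rule abs_le_nn_integral_derivative[OF fd fc fz, of "\<bar>R\<bar> + norm y"]) auto
  also have "\<dots> \<le> (\<integral>\<^sup>+t. ennreal (\<gamma> * \<bar>\<phi> (y + t *\<^sub>R b)\<bar> powr (\<gamma> - 1) * norm (grad \<phi> (y + t *\<^sub>R b))) \<partial>lborel)"
  proof (intro nn_integral_mono ennreal_leI)
    fix t
    have "\<bar>partial i \<phi> (y + t *\<^sub>R b)\<bar> \<le> norm (grad \<phi> (y + t *\<^sub>R b))"
      using component_le_norm_cart[of "grad \<phi> (y + t *\<^sub>R b)" i] by (simp add: grad_def)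
    then show "\<bar>f' t\<bar> \<le> \<gamma> * \<bar>\<phi> (y + t *\<^sub>R b)\<bar> powr (\<gamma> - 1) * norm (grad \<phi> (y + t *\<^sub>R b))"
      unfolding f'_def using g abs_signed_powr_le[of "\<gamma> - 1" "\<phi> (y + t *\<^sub>R b)"]
      by (auto simp: abs_mult intro!: mult_mono)
  qed
  finally show ?thesis by (simp add: f_def)
qed

lemma powr_absorb_bound:
  fixes a b \<gamma> \<alpha> e :: real
  assumes a: "a > 0" and b: "b \<ge> 0" and g: "\<gamma> > 0" and e: "e > 0" and al: "\<alpha> \<ge> 0" "\<alpha> \<le> 1"
    and th: "1 - \<alpha> * e > 0"
    and h: "a \<le> (\<gamma> * a powr \<alpha> * b powr (1 - \<alpha>)) powr e"
  shows "a \<le> \<gamma> powr (e / (1 - \<alpha> * e)) * b powr ((1 - \<alpha>) * e / (1 - \<alpha> * e))"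
proof -
  define \<theta> where "\<theta> = 1 - \<alpha> * e"
  have t0: "\<theta> > 0" using th by (simp add: \<theta>_def)
  have "(\<gamma> * a powr \<alpha> * b powr (1 - \<alpha>)) powr e = \<gamma> powr e * a powr (\<alpha> * e) * b powr ((1 - \<alpha>) * e)"
    using a b g by (simp add: powr_mult powr_powr)
  with h have h2: "a \<le> \<gamma> powr e * a powr (\<alpha> * e) * b powr ((1 - \<alpha>) * e)" by simp
  have ap: "a powr (\<alpha> * e) > 0" using a by simp
  have "a powr \<theta> = a / a powr (\<alpha> * e)"
    using a by (simp add: \<theta>_def powr_diff)
  also have "\<dots> \<le> \<gamma> powr e * b powr ((1 - \<alpha>) * e)"
    using h2 ap by (simp add: divide_le_eq mult.commute mult.left_commute)
  finally have h3: "a powr \<theta> \<le> \<gamma> powr e * b powr ((1 - \<alpha>) * e)" .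
  have "a = (a powr \<theta>) powr (1 / \<theta>)" using a t0 by (simp add: powr_powr)
  also have "\<dots> \<le> (\<gamma> powr e * b powr ((1 - \<alpha>) * e)) powr (1 / \<theta>)"
    using h3 t0 by (intro powr_mono2) auto
  also have "\<dots> = \<gamma> powr (e / \<theta>) * b powr ((1 - \<alpha>) * e / \<theta>)"
    using b g by (simp add: powr_mult powr_powr)
  finally show ?thesis by (simp add: \<theta>_def)
qed

lemma enn_powr_absorb_bound:
  fixes A B :: ennreal and \<gamma> \<alpha> e :: real
  assumes A: "A \<noteq> top" and g: "\<gamma> > 0" and e: "e > 0" and al: "\<alpha> > 0" "\<alpha> < 1"
    and th: "1 - \<alpha> * e > 0"
    and h: "A \<le> enn_powr (ennreal \<gamma> * enn_powr A \<alpha> * enn_powr B (1 - \<alpha>)) e"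
  shows "A \<le> ennreal (\<gamma> powr (e / (1 - \<alpha> * e))) * enn_powr B ((1 - \<alpha>) * e / (1 - \<alpha> * e))"
proof (cases "B = top")
  case True
  have "ennreal (\<gamma> powr (e / (1 - \<alpha> * e))) * enn_powr B ((1 - \<alpha>) * e / (1 - \<alpha> * e)) = top"
    using True g by (simp add: ennreal_mult_eq_top_iff)
  then show ?thesis by simp
next
  case False
  show ?thesis
  proof (cases "A = 0")
    case True then show ?thesis by simp
  next
    case A0: False
    obtain a where a: "A = ennreal a" "a > 0" using A A0 by (cases A) auto
    obtain b where b: "B = ennreal b" "b \<ge> 0" using False by (cases B) auto
    have "ennreal \<gamma> * enn_powr A \<alpha> * enn_powr B (1 - \<alpha>) = ennreal (\<gamma> * a powr \<alpha> * b powr (1 - \<alpha>))"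
      using a b g by (simp add: enn_powr_ennreal ennreal_mult)
    then have "A \<le> ennreal ((\<gamma> * a powr \<alpha> * b powr (1 - \<alpha>)) powr e)"
      using h a b g by (simp add: enn_powr_ennreal)
    then have "a \<le> (\<gamma> * a powr \<alpha> * b powr (1 - \<alpha>)) powr e"
      using a by (simp add: ennreal_le_iff2)
    then have "a \<le> \<gamma> powr (e / (1 - \<alpha> * e)) * b powr ((1 - \<alpha>) * e / (1 - \<alpha> * e))"
      using powr_absorb_bound[OF a(2) b(2) g e less_imp_le[OF al(1)] less_imp_le[OF al(2)] th] by blast
    then show ?thesis using a b g by (simp add: enn_powr_ennreal ennreal_mult[symmetric] ennreal_leI)
  qed
qed

lemma C1c_bounded:
  assumes "C1c \<phi>"
  shows "\<exists>M R. M \<ge> 0 \<and> (\<forall>x. \<bar>\<phi> x\<bar> \<le> M) \<and> (\<forall>x. R \<le> norm x \<longrightarrow> \<phi> x = 0)"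
proof -
  obtain R where R: "\<And>x. R \<le> norm x \<Longrightarrow> \<phi> x = 0" using assms unfolding C1c_def by blast
  have "compact (\<phi> ` cball 0 R)"
    using compact_continuous_image[OF continuous_on_subset[OF C1c_continuous_on[OF assms]]] by auto
  then obtain M where M: "\<And>y. y \<in> \<phi> ` cball 0 R \<Longrightarrow> norm y \<le> M"
    using compact_imp_bounded bounded_iff by metis
  have "\<bar>\<phi> x\<bar> \<le> max M 0" for x
    using M[of "\<phi> x"] R[of x] by (cases "norm x \<le> R") auto
  then show ?thesis using R by (intro exI[of _ "max M 0"] exI[of _ R]) auto
qed

lemma C1c_nn_integral_powr_finite:
  fixes \<phi> :: "real^'n::finite \<Rightarrow> real"
  assumes "C1c \<phi>" "s > 0"
  shows "(\<integral>\<^sup>+y. ennreal (\<bar>\<phi> y\<bar> powr s) \<partial>lborel) < top"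
proof -
  obtain M R where M: "M \<ge> 0" "\<And>x. \<bar>\<phi> x\<bar> \<le> M" and R: "\<And>x. R \<le> norm x \<Longrightarrow> \<phi> x = 0"
    using C1c_bounded[OF assms(1)] by blast
  have "(\<integral>\<^sup>+y. ennreal (\<bar>\<phi> y\<bar> powr s) \<partial>lborel) \<le> (\<integral>\<^sup>+y. ennreal (M powr s) * indicator (cball (0::real^'n) R) y \<partial>lborel)"
  proof (rule nn_integral_mono)
    fix y
    show "ennreal (\<bar>\<phi> y\<bar> powr s) \<le> ennreal (M powr s) * indicator (cball 0 R) y"
    proof (cases "norm y \<le> R")
      case True then show ?thesis using M assms(2) by (auto intro!: ennreal_leI powr_mono2 simp: indicator_def)
    next
      case False then show ?thesis using R[of y] by auto
    qed
  qed
  also have "\<dots> = ennreal (M powr s) * emeasure lborel (cball (0::real^'n) R)"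
    by (simp add: nn_integral_cmult_indicator)
  also have "\<dots> < top"
    using emeasure_bounded_finite[of "cball (0::real^'n) R"] by (simp add: ennreal_mult_less_top)
  finally show ?thesis .
qed

lemma sobolev_conj_gt:
  assumes "0 < p" "p < N"
  shows "p < sobolev_conj N p"
  using assms by (simp add: sobolev_conj_def field_simps)

lemma sobolev_exponent_identities:
  fixes N p :: real
  assumes "2 \<le> N" "p < N" "1 < p"
  defines "ps \<equiv> N * p / (N - p)" and "M \<equiv> N / (N - 1)"
    and "\<gamma> \<equiv> p * (N - 1) / (N - p)" and "\<alpha> \<equiv> (p - 1) / p"
  shows "1 < \<gamma>" "\<gamma> * M = ps" "ps * \<alpha> = \<gamma> - 1" "0 < 1 - \<alpha> * M"
    "M / (1 - \<alpha> * M) = ps" "(1 - \<alpha>) * M / (1 - \<alpha> * M) = ps / p"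
proof -
  have "(N - 1) * (N - p) > 0" using assms by simp
  then have nz1: "p + N * N \<noteq> N + N * p" by (simp add: algebra_simps)
  have "p * ((N - 1) * (N - p)) > 0" using assms by simp
  then have nz2: "p * p + N * (N * p) \<noteq> N * p + N * (p * p)" by (simp add: algebra_simps)
  show "1 < \<gamma>" "ps * \<alpha> = \<gamma> - 1" "0 < 1 - \<alpha> * M"
    using assms by (simp_all add: field_split_simps)
  show "\<gamma> * M = ps" "M / (1 - \<alpha> * M) = ps"
    using assms nz1 by (simp_all add: field_split_simps)
  show "(1 - \<alpha>) * M / (1 - \<alpha> * M) = ps / p"
    using assms nz2 by (simp add: field_split_simps)
qed
lemma nn_integral_Hoelder_real:
  fixes f g :: "'a \<Rightarrow> real"
  assumes [measurable]: "f \<in> borel_measurable M" "g \<in> borel_measurable M"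
    and \<alpha>: "0 < \<alpha>" "\<alpha> < 1" and "0 < s" "0 < r"
  shows "(\<integral>\<^sup>+x. ennreal (\<bar>f x\<bar> powr (s * \<alpha>) * \<bar>g x\<bar> powr (r * (1 - \<alpha>))) \<partial>M)
         \<le> enn_powr (\<integral>\<^sup>+x. ennreal (\<bar>f x\<bar> powr s) \<partial>M) \<alpha> * enn_powr (\<integral>\<^sup>+x. ennreal (\<bar>g x\<bar> powr r) \<partial>M) (1 - \<alpha>)"
proof -
  have "ennreal (\<bar>f x\<bar> powr (s * \<alpha>) * \<bar>g x\<bar> powr (r * (1 - \<alpha>)))
      = enn_powr (ennreal (\<bar>f x\<bar> powr s)) \<alpha> * enn_powr (ennreal (\<bar>g x\<bar> powr r)) (1 - \<alpha>)" for x
    by (simp add: enn_powr_ennreal powr_powr ennreal_mult)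
  then show ?thesis
    using nn_integral_Hoelder[of "\<lambda>x. ennreal (\<bar>f x\<bar> powr s)" M "\<lambda>x. ennreal (\<bar>g x\<bar> powr r)", OF _ _ \<alpha>]
    by simp
qed

lemma C1c_nn_integral_powr_le_Gagliardo:
  fixes \<phi> :: "real^'n::finite \<Rightarrow> real"
  assumes \<phi>: "C1c \<phi>" and N: "CARD('n) \<ge> 2" and \<gamma>: "\<gamma> > 1"
  defines "M \<equiv> real CARD('n) / (real CARD('n) - 1)"
  shows "(\<integral>\<^sup>+y. ennreal (\<bar>\<phi> y\<bar> powr (\<gamma> * M)) \<partial>lborel)
         \<le> enn_powr (\<integral>\<^sup>+y. ennreal (\<gamma> * \<bar>\<phi> y\<bar> powr (\<gamma> - 1) * norm (grad \<phi> y)) \<partial>lborel) M"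
proof -
  define D where "D y = ennreal (\<gamma> * \<bar>\<phi> y\<bar> powr (\<gamma> - 1) * norm (grad \<phi> y))" for y
  have [measurable]: "\<phi> \<in> borel_measurable borel" "grad \<phi> \<in> borel_measurable borel"
    using C1c_continuous_on[OF \<phi>] C1c_grad_continuous_on[OF \<phi>] by (auto intro: borel_measurable_continuous_onI)
  have "(\<integral>\<^sup>+y. ennreal (\<bar>\<bar>\<phi> y\<bar> powr \<gamma>\<bar> powr (real DIM(real^'n) / (real DIM(real^'n) - 1))) \<partial>lborel)
      \<le> (\<Prod>b\<in>(Basis::(real^'n) set). enn_powr (\<integral>\<^sup>+y. D y \<partial>lborel) (1 / (real DIM(real^'n) - 1)))"
  proof (rule Gagliardo_inequality[where k = "\<lambda>y. \<bar>\<phi> y\<bar> powr \<gamma>" and d = "\<lambda>_. D"])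
    show "2 \<le> DIM(real^'n)" using N by simp
    show "(\<lambda>y. \<bar>\<phi> y\<bar> powr \<gamma>) \<in> borel_measurable borel" "D \<in> borel_measurable borel"
      unfolding D_def by measurable
    show "ennreal \<bar>\<bar>\<phi> y\<bar> powr \<gamma>\<bar> \<le> (\<integral>\<^sup>+t. D (y + t *\<^sub>R b) \<partial>lborel)" if "b \<in> Basis" for y b
      using C1c_abs_powr_le_line_integral[OF \<phi> \<gamma> that] unfolding D_def by simp
  qed
  also have "\<dots> = enn_powr (\<integral>\<^sup>+y. D y \<partial>lborel) M"
    using N by (simp add: enn_powr_power M_def)
  finally show ?thesis
    unfolding D_def M_def by (simp add: powr_powr)
qed

text \<open>The Gagliardo--Nirenberg trick: apply the case \<open>p = 1\<close> to \<open>|\<phi>|\<^sup>\<gamma>\<close> and absorb the factor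
  \<open>|\<phi>|\<^sup>\<gamma>\<^sup>-\<^sup>1\<close> produced by the chain rule into the left-hand side by Hoelder's inequality.\<close>
lemma Sobolev_inequality_C1c:
  fixes \<phi> :: "real^'n::finite \<Rightarrow> real" and p :: real
  assumes \<phi>: "C1c \<phi>" and N: "CARD('n) \<ge> 2" and p: "1 < p" "p < real CARD('n)"
  defines "ps \<equiv> sobolev_conj (real CARD('n)) p"
  shows "(\<integral>\<^sup>+y. ennreal (\<bar>\<phi> y\<bar> powr ps) \<partial>lborel)
    \<le> ennreal ((p * (real CARD('n) - 1) / (real CARD('n) - p)) powr ps)
       * enn_powr (\<integral>\<^sup>+y. ennreal (norm (grad \<phi> y) powr p) \<partial>lborel) (ps / p)"
proof -
  define Nr where "Nr = real CARD('n)"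
  define M where "M = Nr / (Nr - 1)"
  define \<gamma> where "\<gamma> = p * (Nr - 1) / (Nr - p)"
  define \<alpha> where "\<alpha> = (p - 1) / p"
  define A where "A = (\<integral>\<^sup>+y. ennreal (\<bar>\<phi> y\<bar> powr ps) \<partial>lborel)"
  define B where "B = (\<integral>\<^sup>+y. ennreal (norm (grad \<phi> y) powr p) \<partial>lborel)"
  have ps: "ps = Nr * p / (Nr - p)" by (simp add: ps_def sobolev_conj_def Nr_def)
  have "2 \<le> Nr" "p < Nr" using N p by (auto simp: Nr_def)
  note exps = sobolev_exponent_identities[OF this p(1), folded ps M_def \<gamma>_def \<alpha>_def]
  have \<alpha>: "0 < \<alpha>" "\<alpha> < 1" "p * (1 - \<alpha>) = 1" using p by (auto simp: \<alpha>_def field_simps)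
  have [measurable]: "\<phi> \<in> borel_measurable borel" "grad \<phi> \<in> borel_measurable borel"
    using C1c_continuous_on[OF \<phi>] C1c_grad_continuous_on[OF \<phi>] by (auto intro: borel_measurable_continuous_onI)
  have "A \<le> enn_powr (\<integral>\<^sup>+y. ennreal (\<gamma> * \<bar>\<phi> y\<bar> powr (\<gamma> - 1) * norm (grad \<phi> y)) \<partial>lborel) M"
    using C1c_nn_integral_powr_le_Gagliardo[OF \<phi> N exps(1)] exps(2)
    by (simp add: A_def M_def Nr_def)
  also have "(\<integral>\<^sup>+y. ennreal (\<gamma> * \<bar>\<phi> y\<bar> powr (\<gamma> - 1) * norm (grad \<phi> y)) \<partial>lborel)
      = ennreal \<gamma> * (\<integral>\<^sup>+y. ennreal (\<bar>\<phi> y\<bar> powr (ps * \<alpha>) * \<bar>norm (grad \<phi> y)\<bar> powr (p * (1 - \<alpha>))) \<partial>lborel)"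
    using exps(1,3) \<alpha>(3) by (simp add: ennreal_mult nn_integral_cmult mult.assoc)
  also have "\<dots> \<le> ennreal \<gamma> * (enn_powr A \<alpha> * enn_powr B (1 - \<alpha>))"
    using nn_integral_Hoelder_real[of \<phi> lborel "\<lambda>y. norm (grad \<phi> y)" \<alpha> ps p] \<alpha> p \<open>p < Nr\<close>
    unfolding A_def B_def by (intro mult_left_mono) (auto simp: ps)
  finally have "A \<le> enn_powr (ennreal \<gamma> * enn_powr A \<alpha> * enn_powr B (1 - \<alpha>)) M"
    using \<open>2 \<le> Nr\<close> by (simp add: mult.assoc enn_powr_mono M_def)
  moreover have "A \<noteq> top"
    using C1c_nn_integral_powr_finite[OF \<phi>, of ps] p \<open>p < Nr\<close> by (simp add: A_def ps)
  ultimately have "A \<le> ennreal (\<gamma> powr (M / (1 - \<alpha> * M))) * enn_powr B ((1 - \<alpha>) * M / (1 - \<alpha> * M))"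
    using exps(1,4) \<alpha> \<open>2 \<le> Nr\<close> by (intro enn_powr_absorb_bound) (auto simp: M_def)
  then show ?thesis
    using exps(5,6) by (simp add: A_def B_def \<gamma>_def Nr_def)
qed

section \<open>Finsler--Minkowski norms, Luxemburg norms and test functions\<close>

text \<open>A Finsler--Minkowski norm in the sense of \<^const>\<open>finsler_minkowski_norm\<close> may be negative
  (\<open>-H\<close> satisfies the definition whenever \<open>H\<close> does); integrands such as \<open>H(\<nabla>u)\<^sup>p\<close> are
  nevertheless meaningful because \<open>powr\<close> ignores the sign of its base.\<close>
lemma powr_abs_base: "(x::real) powr a = \<bar>x\<bar> powr a"
  by (cases "x \<ge> 0") (auto simp: uminus_powr_eq[of "-x", simplified, symmetric])

lemma finsler_minkowski_norm_continuous_on_nonzero: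
  assumes "finsler_minkowski_norm H"
  shows "continuous_on (UNIV - {0}) H"
proof -
  have "iter_partial [] H differentiable_on (UNIV - {0})"
    using assms unfolding finsler_minkowski_norm_def C_inf_on_def by blast
  then show ?thesis by (simp add: differentiable_imp_continuous_on)
qed

lemma finsler_minkowski_norm_equivalent:
  fixes H :: "real^'n::finite \<Rightarrow> real"
  assumes F: "finsler_minkowski_norm H"
  obtains c C where "0 < c" "0 < C" "\<And>\<xi>. c * norm \<xi> \<le> \<bar>H \<xi>\<bar>" "\<And>\<xi>. \<bar>H \<xi>\<bar> \<le> C * norm \<xi>"
proof -
  have zero: "\<And>\<xi>. H \<xi> = 0 \<longleftrightarrow> \<xi> = 0" and hom: "\<And>t \<xi>. H (t *\<^sub>R \<xi>) = \<bar>t\<bar> * H \<xi>"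
    using F unfolding finsler_minkowski_norm_def by blast+
  define S where "S = sphere (0::real^'n) 1"
  have "compact S" "S \<noteq> {}" using norm_axis_1[of "undefined::'n"] by (auto simp: S_def)
  moreover have "continuous_on S (\<lambda>x. \<bar>H x\<bar>)"
    by (intro continuous_intros continuous_on_subset[OF finsler_minkowski_norm_continuous_on_nonzero[OF F]])
      (auto simp: S_def)
  ultimately obtain x0 x1 where x: "x0 \<in> S" "x1 \<in> S" "\<And>y. y \<in> S \<Longrightarrow> \<bar>H x0\<bar> \<le> \<bar>H y\<bar> \<and> \<bar>H y\<bar> \<le> \<bar>H x1\<bar>"
    using continuous_attains_inf continuous_attains_sup by metis
  have scale: "\<bar>H \<xi>\<bar> = norm \<xi> * \<bar>H (\<xi> /\<^sub>R norm \<xi>)\<bar>" "\<xi> /\<^sub>R norm \<xi> \<in> S" if "\<xi> \<noteq> 0" for \<xi>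
    using that hom[of "norm \<xi>" "\<xi> /\<^sub>R norm \<xi>"] by (auto simp: S_def abs_mult)
  have "\<bar>H x0\<bar> * norm \<xi> \<le> \<bar>H \<xi>\<bar> \<and> \<bar>H \<xi>\<bar> \<le> \<bar>H x1\<bar> * norm \<xi>" for \<xi>
    using scale[of \<xi>] x(3)[of "\<xi> /\<^sub>R norm \<xi>"] zero[of \<xi>]
    by (cases "\<xi> = 0") (auto simp: mult.commute mult_left_mono)
  moreover have "0 < \<bar>H x0\<bar>" "\<bar>H x0\<bar> \<le> \<bar>H x1\<bar>" using x zero[of x0] by (auto simp: S_def)
  ultimately show ?thesis using that[of "\<bar>H x0\<bar>" "\<bar>H x1\<bar>"] by auto
qed

lemma finsler_minkowski_norm_continuous:
  assumes F: "finsler_minkowski_norm H"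
  shows "continuous_on UNIV H"
proof -
  obtain C where C: "\<And>\<xi>. \<bar>H \<xi>\<bar> \<le> C * norm \<xi>"
    using finsler_minkowski_norm_equivalent[OF F] by blast
  have "(H \<longlongrightarrow> 0) (at 0)"
    by (rule Lim_null_comparison[where g = "\<lambda>\<xi>. C * norm \<xi>"])
      (auto intro: always_eventually C intro!: tendsto_eq_intros)
  moreover have "H 0 = 0" using F unfolding finsler_minkowski_norm_def by blast
  ultimately have "isCont H x" for x
    using finsler_minkowski_norm_continuous_on_nonzero[OF F]
    by (cases "x = 0") (simp_all add: isCont_def continuous_on_eq_continuous_at open_Diff)
  then show ?thesis by (simp add: continuous_at_imp_continuous_on)
qed

lemma lux_norm_less_imp_modular_le:
  fixes f :: "real^'n::finite \<Rightarrow> real"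
  assumes lt: "lux_norm \<Omega> \<mu> p q f < ennreal \<epsilon>"
    and mu: "\<And>x. x \<in> \<Omega> \<Longrightarrow> 0 \<le> \<mu> x"
    and fm: "f \<in> borel_measurable lebesgue"
    and mu_measurable: "(\<lambda>x. \<mu> x * indicator \<Omega> x) \<in> borel_measurable lebesgue"
    and Om[measurable]: "\<Omega> \<in> sets lebesgue"
  shows "\<exists>\<tau>. 0 < \<tau> \<and> \<tau> < \<epsilon> \<and>
    (\<integral>\<^sup>+x. ennreal (\<bar>f x\<bar> powr p) * indicator \<Omega> x \<partial>lebesgue) \<le> ennreal (\<tau> powr p) \<and>
    (\<integral>\<^sup>+x. ennreal (\<mu> x * \<bar>f x\<bar> powr q) * indicator \<Omega> x \<partial>lebesgue) \<le> ennreal (\<tau> powr q)"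
proof -
  obtain z where z: "z \<in> {ennreal \<tau> | \<tau>. \<tau> > 0 \<and>
      (\<integral>\<^sup>+ x. ennreal (musielak \<mu> p q x (\<bar>f x\<bar> / \<tau>)) * indicator \<Omega> x \<partial>lebesgue) \<le> 1}" "z < ennreal \<epsilon>"
    using lt unfolding lux_norm_def by (auto simp: Inf_less_iff)
  then obtain \<tau> where t: "z = ennreal \<tau>" "\<tau> > 0"
    and mod: "(\<integral>\<^sup>+ x. ennreal (musielak \<mu> p q x (\<bar>f x\<bar> / \<tau>)) * indicator \<Omega> x \<partial>lebesgue) \<le> 1" by blast
  have te: "\<tau> < \<epsilon>" using z(2) t by (simp add: ennreal_less_iff)
  define g1 where "g1 x = ennreal ((\<bar>f x\<bar> / \<tau>) powr p) * indicator \<Omega> x" for x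
  define g2 where "g2 x = ennreal ((\<mu> x * indicator \<Omega> x) * (\<bar>f x\<bar> / \<tau>) powr q) * indicator \<Omega> x" for x
  have g1m: "g1 \<in> borel_measurable lebesgue" unfolding g1_def using fm by measurable
  have g2m: "g2 \<in> borel_measurable lebesgue" unfolding g2_def using fm mu_measurable by measurable
  have le1: "g1 x \<le> ennreal (musielak \<mu> p q x (\<bar>f x\<bar> / \<tau>)) * indicator \<Omega> x" for x
    using mu[of x] by (auto simp: g1_def musielak_def indicator_def intro!: ennreal_leI)
  have le2: "g2 x \<le> ennreal (musielak \<mu> p q x (\<bar>f x\<bar> / \<tau>)) * indicator \<Omega> x" for x
    using mu[of x] by (auto simp: g2_def musielak_def indicator_def intro!: ennreal_leI)
  have I1: "(\<integral>\<^sup>+x. g1 x \<partial>lebesgue) \<le> 1" using order_trans[OF nn_integral_mono[OF le1] mod] by simp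
  have I2: "(\<integral>\<^sup>+x. g2 x \<partial>lebesgue) \<le> 1" using order_trans[OF nn_integral_mono[OF le2] mod] by simp
  have e1: "ennreal (\<bar>f x\<bar> powr p) * indicator \<Omega> x = ennreal (\<tau> powr p) * g1 x" for x
    using t by (auto simp: g1_def powr_divide ennreal_mult[symmetric] indicator_def)
  have e2: "ennreal (\<mu> x * \<bar>f x\<bar> powr q) * indicator \<Omega> x = ennreal (\<tau> powr q) * g2 x" for x
    using t by (auto simp: g2_def powr_divide ennreal_mult'[symmetric] indicator_def field_simps)
  have "(\<integral>\<^sup>+x. ennreal (\<bar>f x\<bar> powr p) * indicator \<Omega> x \<partial>lebesgue) = ennreal (\<tau> powr p) * (\<integral>\<^sup>+x. g1 x \<partial>lebesgue)"
    by (simp add: e1 nn_integral_cmult[OF g1m])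
  also have "\<dots> \<le> ennreal (\<tau> powr p)" using I1 mult_left_mono[OF I1, of "ennreal (\<tau> powr p)"] by simp
  finally have A: "(\<integral>\<^sup>+x. ennreal (\<bar>f x\<bar> powr p) * indicator \<Omega> x \<partial>lebesgue) \<le> ennreal (\<tau> powr p)" .
  have "(\<integral>\<^sup>+x. ennreal (\<mu> x * \<bar>f x\<bar> powr q) * indicator \<Omega> x \<partial>lebesgue) = ennreal (\<tau> powr q) * (\<integral>\<^sup>+x. g2 x \<partial>lebesgue)"
    by (simp add: e2 nn_integral_cmult[OF g2m])
  also have "\<dots> \<le> ennreal (\<tau> powr q)" using mult_left_mono[OF I2, of "ennreal (\<tau> powr q)"] by simp
  finally show ?thesis using A t te by blast
qed

lemma borel_measurable_imp_lebesgue: "f \<in> borel_measurable borel \<Longrightarrow> f \<in> borel_measurable lebesgue"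
  by (rule measurable_completion) simp

lemma Cc_inf_support:
  assumes "\<phi> \<in> Cc_inf \<Omega>"
  shows "closure {x. \<phi> x \<noteq> 0} \<subseteq> \<Omega>" "compact (closure {x. \<phi> x \<noteq> 0})"
  using assms unfolding Cc_inf_def by simp_all

lemma Cc_inf_grad_eq_0_outside_support:
  fixes \<phi> :: "real^'n::finite \<Rightarrow> real"
  assumes cc: "\<phi> \<in> Cc_inf \<Omega>" and x: "x \<notin> closure {x. \<phi> x \<noteq> 0}"
  shows "grad \<phi> x = 0"
proof -
  define K where "K = closure {x. \<phi> x \<noteq> 0}"
  have "open (- K)" unfolding K_def by (intro open_Compl closed_closure)
  then obtain e where e: "e > 0" "ball x e \<subseteq> - K" using x unfolding K_def by (meson ComplI open_contains_ball)
  have z: "\<phi> y = 0" if "y \<in> ball x e" for y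
  proof -
    have "y \<notin> K" using e that by blast
    then have "y \<notin> {x. \<phi> x \<noteq> 0}" unfolding K_def by (rule contra_subsetD[OF closure_subset])
    then show ?thesis by simp
  qed
  have "partial i \<phi> x = 0" for i
  proof -
    have ev: "eventually (\<lambda>t. \<phi> (x + t *\<^sub>R axis i 1) = 0) (nhds 0)"
    proof -
      have "eventually (\<lambda>t::real. t \<in> ball 0 e) (nhds 0)"
        using e by (intro eventually_nhds_in_open) auto
      then show ?thesis
        by eventually_elim (auto intro!: z simp: dist_norm)
    qed
    have "((\<lambda>t. \<phi> (x + t *\<^sub>R axis i 1)) has_real_derivative 0) (at 0)"
      by (subst DERIV_cong_ev[OF refl ev refl]) simp
    then show ?thesis unfolding partial_def by (rule DERIV_imp_deriv)
  qed
  then show ?thesis by (simp add: grad_def vec_eq_iff)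
qed

lemma Cc_inf_grad_eq_0_outside:
  fixes \<phi> :: "real^'n::finite \<Rightarrow> real"
  assumes cc: "\<phi> \<in> Cc_inf \<Omega>" and x: "x \<notin> \<Omega>"
  shows "grad \<phi> x = 0"
proof -
  have "x \<notin> closure {x. \<phi> x \<noteq> 0}" by (rule contra_subsetD[OF Cc_inf_support(1)[OF cc] x])
  then show ?thesis by (rule Cc_inf_grad_eq_0_outside_support[OF cc])
qed

lemma Cc_inf_grad_bounded:
  fixes \<phi> :: "real^'n::finite \<Rightarrow> real"
  assumes cc: "\<phi> \<in> Cc_inf \<Omega>"
  shows "\<exists>M\<ge>0. \<forall>x. norm (grad \<phi> x) \<le> M"
proof -
  define K where "K = closure {x. \<phi> x \<noteq> 0}"
  have Kc: "compact K" using Cc_inf_support(2)[OF cc] unfolding K_def .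
  have gc: "continuous_on UNIV (grad \<phi>)" by (rule C1c_grad_continuous_on[OF Cc_inf_imp_C1c[OF cc]])
  have "compact (grad \<phi> ` K)" using compact_continuous_image[OF continuous_on_subset[OF gc] Kc] by simp
  then obtain M where M: "\<And>y. y \<in> grad \<phi> ` K \<Longrightarrow> norm y \<le> M" using compact_imp_bounded bounded_iff by metis
  have "norm (grad \<phi> x) \<le> max M 0" for x
    using M[of "grad \<phi> x"] Cc_inf_grad_eq_0_outside_support[OF cc, of x] unfolding K_def by (cases "x \<in> K") (auto simp: K_def)
  then show ?thesis by (intro exI[of _ "max M 0"]) auto
qed

lemma powr_add_le_two_powr:
  fixes a b p :: real
  assumes "a \<ge> 0" "b \<ge> 0" "p > 0"
  shows "(a + b) powr p \<le> 2 powr p * (a powr p + b powr p)"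
proof -
  have "(a + b) powr p \<le> (2 * max a b) powr p" using assms by (intro powr_mono2) auto
  also have "\<dots> = 2 powr p * max a b powr p" using assms by (simp add: powr_mult)
  also have "\<dots> \<le> 2 powr p * (a powr p + b powr p)"
    using assms by (intro mult_left_mono) (auto simp: max_def)
  finally show ?thesis .
qed

lemma integrable_lebesgue_on_nn_integral:
  fixes f :: "'a::euclidean_space \<Rightarrow> real"
  assumes Om: "\<Omega> \<in> sets lebesgue" and fm: "f \<in> borel_measurable lebesgue"
    and nn: "\<And>x. x \<in> \<Omega> \<Longrightarrow> 0 \<le> f x"
    and fin: "(\<integral>\<^sup>+x. ennreal (f x) * indicator \<Omega> x \<partial>lebesgue) < top"
  shows "integrable (lebesgue_on \<Omega>) f"
    and "ennreal (integral\<^sup>L (lebesgue_on \<Omega>) f) = (\<integral>\<^sup>+x. ennreal (f x) * indicator \<Omega> x \<partial>lebesgue)"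
proof -
  have m: "f \<in> borel_measurable (lebesgue_on \<Omega>)" using fm by (rule measurable_restrict_space1)
  have e: "(\<integral>\<^sup>+x. ennreal (f x) \<partial>lebesgue_on \<Omega>) = (\<integral>\<^sup>+x. ennreal (f x) * indicator \<Omega> x \<partial>lebesgue)"
    using Om by (simp add: nn_integral_restrict_space)
  show i: "integrable (lebesgue_on \<Omega>) f"
    using fin e m nn by (intro integrableI_nonneg) (auto simp: AE_restrict_space_iff)
  show "ennreal (integral\<^sup>L (lebesgue_on \<Omega>) f) = (\<integral>\<^sup>+x. ennreal (f x) * indicator \<Omega> x \<partial>lebesgue)"
  proof -
    have "AE x in lebesgue_on \<Omega>. 0 \<le> f x" using nn by (intro AE_I2) simp
    from nn_integral_eq_integral[OF i this] e show ?thesis by simp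
  qed
qed

section \<open>Integrability and the Sobolev inequality on \<open>W\<^sub>0\<^sup>1\<^sup>,\<^sup>H\<close>\<close>

lemma nn_integral_powr_le_liminf:
  fixes f :: "nat \<Rightarrow> 'a \<Rightarrow> real"
  assumes f: "\<And>n. f n \<in> borel_measurable M" and conv: "AE x in M. (\<lambda>n. f n x) \<longlonglongrightarrow> g x" and r: "0 < r"
  shows "(\<integral>\<^sup>+x. ennreal (\<bar>g x\<bar> powr r) \<partial>M) \<le> liminf (\<lambda>n. \<integral>\<^sup>+x. ennreal (\<bar>f n x\<bar> powr r) \<partial>M)"
proof -
  have "AE x in M. ennreal (\<bar>g x\<bar> powr r) = liminf (\<lambda>n. ennreal (\<bar>f n x\<bar> powr r))"
    using conv
  proof eventually_elim
    case (elim x)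
    have "(\<lambda>n. \<bar>f n x\<bar> powr r) \<longlonglongrightarrow> \<bar>g x\<bar> powr r"
      by (rule tendsto_powr'[OF tendsto_rabs[OF elim] tendsto_const]) (use r in auto)
    then show ?case by (intro lim_imp_Liminf[symmetric] tendsto_ennrealI) auto
  qed
  then have "(\<integral>\<^sup>+x. ennreal (\<bar>g x\<bar> powr r) \<partial>M) = (\<integral>\<^sup>+x. liminf (\<lambda>n. ennreal (\<bar>f n x\<bar> powr r)) \<partial>M)"
    by (rule nn_integral_cong_AE)
  also have "\<dots> \<le> liminf (\<lambda>n. \<integral>\<^sup>+x. ennreal (\<bar>f n x\<bar> powr r) \<partial>M)"
    using f by (intro nn_integral_liminf) measurable
  finally show ?thesis .
qed

lemma nonneg_tendsto_0I:
  fixes x :: "nat \<Rightarrow> real"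
  assumes "\<And>n. 0 \<le> x n" and small: "\<And>e. 0 < e \<Longrightarrow> eventually (\<lambda>n. x n \<le> e) sequentially"
  shows "x \<longlonglongrightarrow> 0"
proof (rule order_tendstoI)
  show "eventually (\<lambda>n. e < x n) sequentially" if "e < 0" for e
    using assms(1) that by (auto intro: always_eventually less_le_trans)
  show "eventually (\<lambda>n. x n < e) sequentially" if "0 < e" for e
  proof -
    have "eventually (\<lambda>n. x n \<le> e / 2) sequentially" using that by (intro small) simp
    then show ?thesis by eventually_elim (use that in auto)
  qed
qed

lemma le_powr_of_forall_pos:
  fixes x y K \<Gamma> r :: real
  assumes le: "\<And>e. 0 < e \<Longrightarrow> x \<le> \<Gamma> * (K * (y + e)) powr r" and "0 \<le> K" "0 \<le> y" "0 < r"
  shows "x \<le> \<Gamma> * (K * y) powr r"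
proof (rule tendsto_lowerbound)
  have "((\<lambda>e. K * (y + e)) \<longlongrightarrow> K * (y + 0)) (at_right 0)"
    by (intro tendsto_intros)
  moreover have "eventually (\<lambda>e::real. 0 \<le> K * (y + e)) (at_right 0)"
    using eventually_at_right_less[of "0::real"] by eventually_elim (use assms in auto)
  ultimately show "((\<lambda>e. \<Gamma> * (K * (y + e)) powr r) \<longlongrightarrow> \<Gamma> * (K * y) powr r) (at_right 0)"
    using assms by (auto intro!: tendsto_mult tendsto_powr')
  show "eventually (\<lambda>e. x \<le> \<Gamma> * (K * (y + e)) powr r) (at_right 0)"
    using eventually_at_right_less[of "0::real"] by eventually_elim (rule le)
qed simp

locale double_phase_setting =
  fixes \<Omega> :: "(real^'n::finite) set" and H :: "real^'n \<Rightarrow> real" and \<mu> :: "real^'n \<Rightarrow> real"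
    and p q c C M\<mu> :: real
  assumes Omega_open: "open \<Omega>" and Omega_bounded: "bounded \<Omega>"
    and H_continuous: "continuous_on UNIV H"
    and c_pos: "c > 0" and H_lower: "\<And>\<xi>. c * norm \<xi> \<le> \<bar>H \<xi>\<bar>"
    and C_pos: "C > 0" and H_upper: "\<And>\<xi>. \<bar>H \<xi>\<bar> \<le> C * norm \<xi>"
    and mu_bounds: "\<And>x. x \<in> \<Omega> \<Longrightarrow> 0 \<le> \<mu> x \<and> \<mu> x \<le> M\<mu>" and M\<mu>_nonneg: "M\<mu> \<ge> 0"
    and mu_measurable: "(\<lambda>x. \<mu> x * indicator \<Omega> x) \<in> borel_measurable lebesgue"
    and exponents: "1 < p" "p < q"
begin

lemma Omega_sets[measurable]: "\<Omega> \<in> sets lebesgue"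
  using Omega_open by (simp add: lmeasurable_open Omega_bounded fmeasurableD)

lemma mu_nonneg: "x \<in> \<Omega> \<Longrightarrow> 0 \<le> \<mu> x"
  using mu_bounds by blast

lemma Omega_finite_measure: "emeasure lebesgue \<Omega> < top"
  using fmeasurableD2[OF lmeasurable_open[OF Omega_bounded Omega_open]] less_top by blast

lemma H_borel[measurable]: "H \<in> borel_measurable borel"
  using H_continuous by (rule borel_measurable_continuous_onI)

lemma Cc_inf_grad_measurable[measurable]: "\<phi> \<in> Cc_inf \<Omega> \<Longrightarrow> grad \<phi> \<in> borel_measurable lebesgue"
  by (intro borel_measurable_imp_lebesgue borel_measurable_continuous_onI C1c_grad_continuous_on Cc_inf_imp_C1c)

lemma Cc_inf_measurable[measurable]: "\<phi> \<in> Cc_inf \<Omega> \<Longrightarrow> \<phi> \<in> borel_measurable lebesgue"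
  by (intro borel_measurable_imp_lebesgue borel_measurable_continuous_onI C1c_continuous_on Cc_inf_imp_C1c)

lemma H_powr_le_shift:
  assumes v: "norm v \<le> K" and r: "0 < r"
  shows "\<bar>H w\<bar> powr r \<le> 2 powr r * (C * K) powr r + 2 powr r * (C / c) powr r * \<bar>H (v - w)\<bar> powr r"
proof -
  have K: "0 \<le> K" using v norm_ge_zero order_trans by blast
  have "norm w \<le> norm v + norm (v - w)"
    using norm_triangle_ineq4[of v "v - w"] by simp
  also have "norm (v - w) \<le> \<bar>H (v - w)\<bar> / c"
    using H_lower[of "v - w"] c_pos by (simp add: field_simps)
  finally have "C * norm w \<le> C * (K + \<bar>H (v - w)\<bar> / c)"
    using v C_pos by (intro mult_left_mono) auto
  then have "\<bar>H w\<bar> \<le> C * K + (C / c) * \<bar>H (v - w)\<bar>"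
    using H_upper[of w] by (simp add: algebra_simps)
  then have "\<bar>H w\<bar> powr r \<le> (C * K + (C / c) * \<bar>H (v - w)\<bar>) powr r"
    using r by (intro powr_mono2) auto
  also have "\<dots> \<le> 2 powr r * ((C * K) powr r + ((C / c) * \<bar>H (v - w)\<bar>) powr r)"
    using C_pos c_pos r K by (intro powr_add_le_two_powr) auto
  also have "((C / c) * \<bar>H (v - w)\<bar>) powr r = (C / c) powr r * \<bar>H (v - w)\<bar> powr r"
    using C_pos c_pos powr_mult[of "C / c" "\<bar>H (v - w)\<bar>" r] by simp
  finally show ?thesis by (simp only: distrib_left mult.assoc)
qed

lemma norm_powr_le_H_powr:
  "norm v powr p \<le> 2 powr p / c powr p * (\<bar>H w\<bar> powr p + \<bar>H (v - w)\<bar> powr p)"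
proof -
  have "norm v \<le> norm w + norm (v - w)"
    using norm_triangle_ineq[of w "v - w"] by simp
  also have "\<dots> \<le> \<bar>H w\<bar> / c + \<bar>H (v - w)\<bar> / c"
    using H_lower[of w] H_lower[of "v - w"] c_pos by (simp add: field_simps)
  finally have "norm v powr p \<le> (\<bar>H w\<bar> / c + \<bar>H (v - w)\<bar> / c) powr p"
    using exponents by (intro powr_mono2) auto
  also have "\<dots> \<le> 2 powr p * ((\<bar>H w\<bar> / c) powr p + (\<bar>H (v - w)\<bar> / c) powr p)"
    using c_pos exponents by (intro powr_add_le_two_powr) auto
  finally show ?thesis
    using c_pos by (simp add: powr_divide field_simps)
qed

lemma nn_integral_affine_bound_finite:
  fixes g :: "real^'n \<Rightarrow> real"
  assumes g: "g \<in> borel_measurable lebesgue" and A: "A \<ge> 0" and B: "B \<ge> 0"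
    and fin: "(\<integral>\<^sup>+x. ennreal (g x) * indicator \<Omega> x \<partial>lebesgue) < top"
    and le: "\<And>x. x \<in> \<Omega> \<Longrightarrow> f x \<le> A + B * g x" and g_nonneg: "\<And>x. x \<in> \<Omega> \<Longrightarrow> 0 \<le> g x"
  shows "(\<integral>\<^sup>+x. ennreal (f x) * indicator \<Omega> x \<partial>lebesgue) < top"
proof -
  have "ennreal (f x) * indicator \<Omega> x \<le> ennreal A * indicator \<Omega> x + ennreal B * (ennreal (g x) * indicator \<Omega> x)" for x
  proof (cases "x \<in> \<Omega>")
    case True
    have "ennreal (f x) \<le> ennreal (A + B * g x)" using le True by (intro ennreal_leI) auto
    also have "\<dots> = ennreal A + ennreal B * ennreal (g x)"
      using A B g_nonneg True by (simp add: ennreal_plus ennreal_mult)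
    finally show ?thesis using True by simp
  qed simp
  then have "(\<integral>\<^sup>+x. ennreal (f x) * indicator \<Omega> x \<partial>lebesgue)
      \<le> (\<integral>\<^sup>+x. ennreal A * indicator \<Omega> x + ennreal B * (ennreal (g x) * indicator \<Omega> x) \<partial>lebesgue)"
    by (rule nn_integral_mono)
  also have "\<dots> = ennreal A * emeasure lebesgue \<Omega> + ennreal B * (\<integral>\<^sup>+x. ennreal (g x) * indicator \<Omega> x \<partial>lebesgue)"
    using g by (simp add: nn_integral_add nn_integral_cmult nn_integral_cmult_indicator)
  also have "\<dots> < top"
    using Omega_finite_measure fin by (simp add: ennreal_mult_less_top)
  finally show ?thesis .
qed

lemma W0_close_test_function:
  assumes uG: "(u, G) \<in> W0 \<Omega> H \<mu> p q"
  obtains \<phi> where "\<phi> \<in> Cc_inf \<Omega>"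
    "(\<integral>\<^sup>+x. ennreal (\<bar>H (grad \<phi> x - G x)\<bar> powr p) * indicator \<Omega> x \<partial>lebesgue) < top"
    "(\<integral>\<^sup>+x. ennreal (\<mu> x * indicator \<Omega> x * \<bar>H (grad \<phi> x - G x)\<bar> powr q) * indicator \<Omega> x \<partial>lebesgue) < top"
proof -
  obtain \<phi> where G[measurable]: "G \<in> borel_measurable lebesgue" and \<phi>: "\<And>k. \<phi> k \<in> Cc_inf \<Omega>"
    and lim: "(\<lambda>k. lux_norm \<Omega> \<mu> p q (\<lambda>x. H (grad (\<phi> k) x - G x))) \<longlonglongrightarrow> 0"
    using uG unfolding W0_def by blast
  obtain k where k: "lux_norm \<Omega> \<mu> p q (\<lambda>x. H (grad (\<phi> k) x - G x)) < ennreal 1"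
    using order_tendstoD(2)[OF lim, of "ennreal 1"] by (auto simp: eventually_sequentially)
  have f: "(\<lambda>x. H (grad (\<phi> k) x - G x)) \<in> borel_measurable lebesgue"
    using \<phi>[of k] by measurable
  obtain \<tau> where "\<tau> < 1"
    and p_part: "(\<integral>\<^sup>+x. ennreal (\<bar>H (grad (\<phi> k) x - G x)\<bar> powr p) * indicator \<Omega> x \<partial>lebesgue) \<le> ennreal (\<tau> powr p)"
    and q_part: "(\<integral>\<^sup>+x. ennreal (\<mu> x * \<bar>H (grad (\<phi> k) x - G x)\<bar> powr q) * indicator \<Omega> x \<partial>lebesgue) \<le> ennreal (\<tau> powr q)"
    using lux_norm_less_imp_modular_le[OF k mu_nonneg f mu_measurable Omega_sets] by blast
  have "(\<integral>\<^sup>+x. ennreal (\<mu> x * indicator \<Omega> x * \<bar>H (grad (\<phi> k) x - G x)\<bar> powr q) * indicator \<Omega> x \<partial>lebesgue)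
      = (\<integral>\<^sup>+x. ennreal (\<mu> x * \<bar>H (grad (\<phi> k) x - G x)\<bar> powr q) * indicator \<Omega> x \<partial>lebesgue)"
    by (intro nn_integral_cong) (auto simp: indicator_def)
  also have "\<dots> < top" by (rule order_le_less_trans[OF q_part ennreal_less_top])
  finally show ?thesis by (rule that[OF \<phi> order_le_less_trans[OF p_part ennreal_less_top]])
qed

lemma W0_gradient_nn_integral_finite:
  assumes uG: "(u, G) \<in> W0 \<Omega> H \<mu> p q"
  shows "(\<integral>\<^sup>+x. ennreal (\<bar>H (G x)\<bar> powr p) * indicator \<Omega> x \<partial>lebesgue) < top"
proof -
  have [measurable]: "G \<in> borel_measurable lebesgue" using uG unfolding W0_def by blast
  obtain \<phi> where \<phi>: "\<phi> \<in> Cc_inf \<Omega>"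
    and fin: "(\<integral>\<^sup>+x. ennreal (\<bar>H (grad \<phi> x - G x)\<bar> powr p) * indicator \<Omega> x \<partial>lebesgue) < top"
    by (rule W0_close_test_function[OF uG])
  obtain K where K: "K \<ge> 0" "\<And>x. norm (grad \<phi> x) \<le> K" using Cc_inf_grad_bounded[OF \<phi>] by blast
  show ?thesis
    using H_powr_le_shift[OF K(2)] exponents \<phi> K(1)
    by (intro nn_integral_affine_bound_finite[where A = "2 powr p * (C * K) powr p"
          and B = "2 powr p * (C / c) powr p", OF _ _ _ fin]) auto
qed

lemma W0_gradient_integrable:
  assumes uG: "(u, G) \<in> W0 \<Omega> H \<mu> p q"
  shows "integrable (lebesgue_on \<Omega>) (\<lambda>x. \<bar>H (G x)\<bar> powr p)"
    and "integrable (lebesgue_on \<Omega>) (\<lambda>x. \<mu> x * \<bar>H (G x)\<bar> powr q)"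
proof -
  have [measurable]: "G \<in> borel_measurable lebesgue" using uG unfolding W0_def by blast
  show "integrable (lebesgue_on \<Omega>) (\<lambda>x. \<bar>H (G x)\<bar> powr p)"
    by (rule integrable_lebesgue_on_nn_integral(1)[OF Omega_sets _ _ W0_gradient_nn_integral_finite[OF uG]]) auto
  obtain \<phi> where \<phi>: "\<phi> \<in> Cc_inf \<Omega>"
    and fin: "(\<integral>\<^sup>+x. ennreal (\<mu> x * indicator \<Omega> x * \<bar>H (grad \<phi> x - G x)\<bar> powr q) * indicator \<Omega> x \<partial>lebesgue) < top"
    by (rule W0_close_test_function[OF uG])
  obtain K where K: "K \<ge> 0" "\<And>x. norm (grad \<phi> x) \<le> K" using Cc_inf_grad_bounded[OF \<phi>] by blast
  define A where "A = 2 powr q * (C * K) powr q"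
  define B where "B = 2 powr q * (C / c) powr q"
  have "\<mu> x * indicator \<Omega> x * \<bar>H (G x)\<bar> powr q
      \<le> M\<mu> * A + B * (\<mu> x * indicator \<Omega> x * \<bar>H (grad \<phi> x - G x)\<bar> powr q)" if x: "x \<in> \<Omega>" for x
  proof -
    have "\<mu> x * \<bar>H (G x)\<bar> powr q \<le> \<mu> x * (A + B * \<bar>H (grad \<phi> x - G x)\<bar> powr q)"
      using mu_bounds[OF x] H_powr_le_shift[OF K(2), of q "G x"] exponents
      by (intro mult_left_mono) (auto simp: A_def B_def)
    also have "\<dots> \<le> M\<mu> * A + B * (\<mu> x * \<bar>H (grad \<phi> x - G x)\<bar> powr q)"
      using mu_bounds[OF x] by (simp add: algebra_simps A_def mult_right_mono)
    finally show ?thesis using x by simp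
  qed
  then have "(\<integral>\<^sup>+x. ennreal (\<mu> x * indicator \<Omega> x * \<bar>H (G x)\<bar> powr q) * indicator \<Omega> x \<partial>lebesgue) < top"
  proof (intro nn_integral_affine_bound_finite[where A = "M\<mu> * A" and B = B, OF _ _ _ fin])
    show "(\<lambda>x. \<mu> x * indicator \<Omega> x * \<bar>H (grad \<phi> x - G x)\<bar> powr q) \<in> borel_measurable lebesgue"
      using mu_measurable \<phi> by measurable
  qed (use mu_nonneg M\<mu>_nonneg in \<open>auto simp: A_def B_def\<close>)
  then have "integrable (lebesgue_on \<Omega>) (\<lambda>x. \<mu> x * indicator \<Omega> x * \<bar>H (G x)\<bar> powr q)"
    using mu_measurable mu_bounds by (intro integrable_lebesgue_on_nn_integral(1)[OF Omega_sets]) auto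
  then show "integrable (lebesgue_on \<Omega>) (\<lambda>x. \<mu> x * \<bar>H (G x)\<bar> powr q)"
    by (rule Bochner_Integration.integrable_cong[THEN iffD1, rotated -1]) auto
qed

lemma lux_norm_tendsto_0_eventually_small:
  assumes lim: "(\<lambda>k. lux_norm \<Omega> \<mu> p q (f k)) \<longlonglongrightarrow> 0"
    and f: "\<And>k. f k \<in> borel_measurable lebesgue" and e: "e > 0"
  shows "eventually (\<lambda>k. (\<integral>\<^sup>+x. ennreal (\<bar>f k x\<bar> powr p) * indicator \<Omega> x \<partial>lebesgue) \<le> ennreal e) sequentially"
proof -
  have p: "p > 0" using exponents by simp
  have "eventually (\<lambda>k. lux_norm \<Omega> \<mu> p q (f k) < ennreal (e powr (1 / p))) sequentially"
    using order_tendstoD(2)[OF lim, of "ennreal (e powr (1 / p))"] e by simp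
  then show ?thesis
  proof eventually_elim
    case (elim k)
    obtain \<tau> where \<tau>: "0 < \<tau>" "\<tau> < e powr (1 / p)"
      and I: "(\<integral>\<^sup>+x. ennreal (\<bar>f k x\<bar> powr p) * indicator \<Omega> x \<partial>lebesgue) \<le> ennreal (\<tau> powr p)"
      using lux_norm_less_imp_modular_le[OF elim mu_nonneg f mu_measurable Omega_sets] by blast
    have "\<tau> powr p \<le> (e powr (1 / p)) powr p" using \<tau> p by (intro powr_mono2) auto
    also have "\<dots> = e" using e p by (simp add: powr_powr)
    finally show ?case using I by (meson ennreal_leI order_trans)
  qed
qed

lemma lux_norm_tendsto_0_imp_L1_tendsto_0:
  assumes lim: "(\<lambda>k. lux_norm \<Omega> \<mu> p q (\<lambda>x. f k x - u x)) \<longlonglongrightarrow> 0"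
    and f: "\<And>k. f k \<in> borel_measurable lebesgue" and u: "u \<in> borel_measurable lebesgue"
  obtains k0 where "\<And>n. integrable (lebesgue_on \<Omega>) (\<lambda>x. \<bar>f (n + k0) x - u x\<bar> powr p)"
    and "(\<lambda>n. \<integral>x. norm (\<bar>f (n + k0) x - u x\<bar> powr p) \<partial>lebesgue_on \<Omega>) \<longlonglongrightarrow> 0"
proof -
  define a where "a k = (\<integral>\<^sup>+x. ennreal (\<bar>f k x - u x\<bar> powr p) * indicator \<Omega> x \<partial>lebesgue)" for k
  have fu[measurable]: "(\<lambda>x. f k x - u x) \<in> borel_measurable lebesgue" for k
    using f u by measurable
  have small: "eventually (\<lambda>k. a k \<le> ennreal e) sequentially" if "e > 0" for e
    unfolding a_def by (rule lux_norm_tendsto_0_eventually_small[OF lim fu that])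
  obtain k0 where k0: "\<And>k. k \<ge> k0 \<Longrightarrow> a k \<le> ennreal 1"
    using small[of 1] by (auto simp: eventually_sequentially)
  define w where "w n = (\<lambda>x. \<bar>f (n + k0) x - u x\<bar> powr p)" for n
  have w_meas: "w n \<in> borel_measurable lebesgue" for n
    unfolding w_def by measurable
  have fin: "(\<integral>\<^sup>+x. ennreal (w n x) * indicator \<Omega> x \<partial>lebesgue) < top" for n
    using order_le_less_trans[OF k0[of "n + k0"] ennreal_less_top] by (simp add: a_def w_def)
  have w_int: "integrable (lebesgue_on \<Omega>) (w n)" for n
    using fin w_meas by (intro integrable_lebesgue_on_nn_integral(1)[OF Omega_sets]) (auto simp: w_def)
  have w_eq: "ennreal (integral\<^sup>L (lebesgue_on \<Omega>) (w n)) = a (n + k0)" for n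
    using integrable_lebesgue_on_nn_integral(2)[OF Omega_sets w_meas _ fin] by (simp add: a_def w_def)
  have "(\<lambda>n. integral\<^sup>L (lebesgue_on \<Omega>) (w n)) \<longlonglongrightarrow> 0"
  proof (rule nonneg_tendsto_0I)
    show "0 \<le> integral\<^sup>L (lebesgue_on \<Omega>) (w n)" for n
      unfolding w_def by (rule integral_nonneg_AE) auto
    show "eventually (\<lambda>n. integral\<^sup>L (lebesgue_on \<Omega>) (w n) \<le> e) sequentially" if e: "0 < e" for e
    proof -
      obtain K where K: "\<And>k. k \<ge> K \<Longrightarrow> a k \<le> ennreal e"
        using small[OF e] by (auto simp: eventually_sequentially)
      have "integral\<^sup>L (lebesgue_on \<Omega>) (w n) \<le> e" if "n \<ge> K" for n
      proof -
        have "ennreal (integral\<^sup>L (lebesgue_on \<Omega>) (w n)) \<le> ennreal e"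
          using K[of "n + k0"] that w_eq[of n] by simp
        then show ?thesis using e by (simp add: ennreal_le_iff)
      qed
      then show ?thesis by (auto simp: eventually_sequentially)
    qed
  qed
  moreover have "(\<integral>x. norm (w n x) \<partial>lebesgue_on \<Omega>) = integral\<^sup>L (lebesgue_on \<Omega>) (w n)" for n
    by (intro Bochner_Integration.integral_cong) (auto simp: w_def)
  ultimately have "(\<lambda>n. \<integral>x. norm (w n x) \<partial>lebesgue_on \<Omega>) \<longlonglongrightarrow> 0"
    by simp
  with w_int show ?thesis
    unfolding w_def by (rule that)
qed

lemma lux_norm_tendsto_0_AE_subseq:
  assumes lim: "(\<lambda>k. lux_norm \<Omega> \<mu> p q (\<lambda>x. f k x - u x)) \<longlonglongrightarrow> 0"
    and f: "\<And>k. f k \<in> borel_measurable lebesgue" and u: "u \<in> borel_measurable lebesgue"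
  obtains s where "strict_mono s" "AE x in lebesgue_on \<Omega>. (\<lambda>n. f (s n) x) \<longlonglongrightarrow> u x"
proof -
  obtain k0 where int: "\<And>n. integrable (lebesgue_on \<Omega>) (\<lambda>x. \<bar>f (n + k0) x - u x\<bar> powr p)"
    and L1: "(\<lambda>n. \<integral>x. norm (\<bar>f (n + k0) x - u x\<bar> powr p) \<partial>lebesgue_on \<Omega>) \<longlonglongrightarrow> 0"
    using lux_norm_tendsto_0_imp_L1_tendsto_0[OF lim f u] by blast
  obtain r where r: "strict_mono r"
    and AE: "AE x in lebesgue_on \<Omega>. (\<lambda>n. \<bar>f (r n + k0) x - u x\<bar> powr p) \<longlonglongrightarrow> 0"
    using tendsto_L1_AE_subseq[OF int L1] by blast
  have "AE x in lebesgue_on \<Omega>. (\<lambda>n. f (r n + k0) x) \<longlonglongrightarrow> u x"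
    using AE
  proof eventually_elim
    case (elim x)
    have "(\<lambda>n. (\<bar>f (r n + k0) x - u x\<bar> powr p) powr (1 / p)) \<longlonglongrightarrow> 0"
      by (rule tendsto_zero_powrI[OF elim tendsto_const]) (use exponents in auto)
    then have "(\<lambda>n. \<bar>f (r n + k0) x - u x\<bar>) \<longlonglongrightarrow> 0"
      using exponents by (simp add: powr_powr)
    then have "(\<lambda>n. f (r n + k0) x - u x) \<longlonglongrightarrow> 0"
      by (rule tendsto_rabs_zero_cancel)
    then show ?case
      by (simp add: LIM_zero_iff)
  qed
  moreover have "strict_mono (\<lambda>n. r n + k0)"
    using r by (simp add: strict_mono_def)
  ultimately show ?thesis using that by blast
qed

lemma Cc_inf_grad_nn_integral_le:
  assumes \<phi>: "\<phi> \<in> Cc_inf \<Omega>" and G[measurable]: "G \<in> borel_measurable lebesgue"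
  shows "(\<integral>\<^sup>+x. ennreal (norm (grad \<phi> x) powr p) \<partial>lborel)
    \<le> ennreal (2 powr p / c powr p) * ((\<integral>\<^sup>+x. ennreal (\<bar>H (G x)\<bar> powr p) * indicator \<Omega> x \<partial>lebesgue)
        + (\<integral>\<^sup>+x. ennreal (\<bar>H (grad \<phi> x - G x)\<bar> powr p) * indicator \<Omega> x \<partial>lebesgue))"
proof -
  have [measurable]: "grad \<phi> \<in> borel_measurable borel"
    using C1c_grad_continuous_on[OF Cc_inf_imp_C1c[OF \<phi>]] by (rule borel_measurable_continuous_onI)
  have "(\<integral>\<^sup>+x. ennreal (norm (grad \<phi> x) powr p) \<partial>lborel)
      = (\<integral>\<^sup>+x. ennreal (norm (grad \<phi> x) powr p) \<partial>lebesgue)"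
    by (simp add: nn_integral_completion)
  also have "\<dots> = (\<integral>\<^sup>+x. ennreal (norm (grad \<phi> x) powr p) * indicator \<Omega> x \<partial>lebesgue)"
    by (intro nn_integral_cong) (auto simp: indicator_def Cc_inf_grad_eq_0_outside[OF \<phi>])
  also have "\<dots> \<le> (\<integral>\<^sup>+x. ennreal (2 powr p / c powr p) * (ennreal (\<bar>H (G x)\<bar> powr p) * indicator \<Omega> x
      + ennreal (\<bar>H (grad \<phi> x - G x)\<bar> powr p) * indicator \<Omega> x) \<partial>lebesgue)"
  proof (intro nn_integral_mono)
    fix x
    have "ennreal (norm (grad \<phi> x) powr p)
        \<le> ennreal (2 powr p / c powr p * (\<bar>H (G x)\<bar> powr p + \<bar>H (grad \<phi> x - G x)\<bar> powr p))"
      by (rule ennreal_leI[OF norm_powr_le_H_powr])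
    also have "\<dots> = ennreal (2 powr p / c powr p) *
        (ennreal (\<bar>H (G x)\<bar> powr p) + ennreal (\<bar>H (grad \<phi> x - G x)\<bar> powr p))"
      by (subst ennreal_mult', simp, subst ennreal_plus, simp_all)
    finally show "ennreal (norm (grad \<phi> x) powr p) * indicator \<Omega> x \<le> ennreal (2 powr p / c powr p) *
        (ennreal (\<bar>H (G x)\<bar> powr p) * indicator \<Omega> x + ennreal (\<bar>H (grad \<phi> x - G x)\<bar> powr p) * indicator \<Omega> x)"
      by (cases "x \<in> \<Omega>") simp_all
  qed
  also have "\<dots> = ennreal (2 powr p / c powr p) * ((\<integral>\<^sup>+x. ennreal (\<bar>H (G x)\<bar> powr p) * indicator \<Omega> x \<partial>lebesgue)
        + (\<integral>\<^sup>+x. ennreal (\<bar>H (grad \<phi> x - G x)\<bar> powr p) * indicator \<Omega> x \<partial>lebesgue))"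
    using \<phi> by (simp add: nn_integral_cmult nn_integral_add)
  finally show ?thesis .
qed

lemma Cc_inf_Sobolev_inequality:
  assumes N: "CARD('n) \<ge> 2" "p < real CARD('n)"
    and \<phi>: "\<phi> \<in> Cc_inf \<Omega>" and G: "G \<in> borel_measurable lebesgue"
  defines "ps \<equiv> sobolev_conj (real CARD('n)) p"
  shows "(\<integral>\<^sup>+x. ennreal (\<bar>\<phi> x\<bar> powr ps) \<partial>lebesgue_on \<Omega>)
    \<le> ennreal ((p * (real CARD('n) - 1) / (real CARD('n) - p)) powr ps)
      * enn_powr (ennreal (2 powr p / c powr p) * ((\<integral>\<^sup>+x. ennreal (\<bar>H (G x)\<bar> powr p) * indicator \<Omega> x \<partial>lebesgue)
          + (\<integral>\<^sup>+x. ennreal (\<bar>H (grad \<phi> x - G x)\<bar> powr p) * indicator \<Omega> x \<partial>lebesgue))) (ps / p)"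
proof -
  have [measurable]: "\<phi> \<in> borel_measurable lebesgue" using \<phi> by measurable
  have "(\<integral>\<^sup>+x. ennreal (\<bar>\<phi> x\<bar> powr ps) \<partial>lebesgue_on \<Omega>) \<le> (\<integral>\<^sup>+x. ennreal (\<bar>\<phi> x\<bar> powr ps) \<partial>lebesgue)"
    by (simp add: nn_integral_restrict_space nn_integral_mono indicator_def)
  also have "\<dots> \<le> ennreal ((p * (real CARD('n) - 1) / (real CARD('n) - p)) powr ps)
      * enn_powr (\<integral>\<^sup>+x. ennreal (norm (grad \<phi> x) powr p) \<partial>lborel) (ps / p)"
    using Sobolev_inequality_C1c[OF Cc_inf_imp_C1c[OF \<phi>] N(1) exponents(1) N(2)]
    by (simp add: ps_def nn_integral_completion)
  also have "\<dots> \<le> ennreal ((p * (real CARD('n) - 1) / (real CARD('n) - p)) powr ps)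
      * enn_powr (ennreal (2 powr p / c powr p) * ((\<integral>\<^sup>+x. ennreal (\<bar>H (G x)\<bar> powr p) * indicator \<Omega> x \<partial>lebesgue)
          + (\<integral>\<^sup>+x. ennreal (\<bar>H (grad \<phi> x - G x)\<bar> powr p) * indicator \<Omega> x \<partial>lebesgue))) (ps / p)"
    using Cc_inf_grad_nn_integral_le[OF \<phi> G] N exponents
    by (intro mult_left_mono enn_powr_mono) (auto simp: ps_def sobolev_conj_def)
  finally show ?thesis .
qed

text \<open>Fatou's lemma along an a.e.\ convergent subsequence of the approximating test functions.\<close>
lemma W0_Sobolev_nn_bound:
  assumes N: "CARD('n) \<ge> 2" "p < real CARD('n)" and uG: "(u, G) \<in> W0 \<Omega> H \<mu> p q" and e: "e > 0"
  defines "ps \<equiv> sobolev_conj (real CARD('n)) p"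
  shows "(\<integral>\<^sup>+x. ennreal (\<bar>u x\<bar> powr ps) \<partial>lebesgue_on \<Omega>)
    \<le> ennreal ((p * (real CARD('n) - 1) / (real CARD('n) - p)) powr ps
         * (2 powr p / c powr p * ((\<integral>x. \<bar>H (G x)\<bar> powr p \<partial>lebesgue_on \<Omega>) + e)) powr (ps / p))"
proof -
  define \<Gamma> where "\<Gamma> = (p * (real CARD('n) - 1) / (real CARD('n) - p)) powr ps"
  define K where "K = 2 powr p / c powr p"
  define y where "y = (\<integral>x. \<bar>H (G x)\<bar> powr p \<partial>lebesgue_on \<Omega>)"
  define Y where "Y = (\<integral>\<^sup>+x. ennreal (\<bar>H (G x)\<bar> powr p) * indicator \<Omega> x \<partial>lebesgue)"
  obtain \<phi> where u[measurable]: "u \<in> borel_measurable lebesgue" and G[measurable]: "G \<in> borel_measurable lebesgue"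
    and \<phi>: "\<And>k. \<phi> k \<in> Cc_inf \<Omega>"
    and lim_u: "(\<lambda>k. lux_norm \<Omega> \<mu> p q (\<lambda>x. \<phi> k x - u x)) \<longlonglongrightarrow> 0"
    and lim_G: "(\<lambda>k. lux_norm \<Omega> \<mu> p q (\<lambda>x. H (grad (\<phi> k) x - G x))) \<longlonglongrightarrow> 0"
    using uG unfolding W0_def by blast
  note [measurable] = Cc_inf_measurable[OF \<phi>] Cc_inf_grad_measurable[OF \<phi>]
  note Sobolev = Cc_inf_Sobolev_inequality[OF N \<phi> G, folded ps_def K_def Y_def]
  have ps: "ps > 0" using N exponents by (simp add: ps_def sobolev_conj_def)
  have K: "0 \<le> K" by (simp add: K_def)
  have y: "y \<ge> 0" unfolding y_def by (rule integral_nonneg_AE) auto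
  have Y: "Y = ennreal y"
    using integrable_lebesgue_on_nn_integral(2)[OF Omega_sets _ _ W0_gradient_nn_integral_finite[OF uG]]
    by (simp add: Y_def y_def)
  obtain s where s: "strict_mono s" and conv: "AE x in lebesgue_on \<Omega>. (\<lambda>n. \<phi> (s n) x) \<longlonglongrightarrow> u x"
    using lux_norm_tendsto_0_AE_subseq[OF lim_u Cc_inf_measurable[OF \<phi>] u] by blast
  have "eventually (\<lambda>k. (\<integral>\<^sup>+x. ennreal (\<bar>H (grad (\<phi> k) x - G x)\<bar> powr p) * indicator \<Omega> x \<partial>lebesgue) \<le> ennreal e)
      sequentially"
    by (rule lux_norm_tendsto_0_eventually_small[OF lim_G _ e]) measurable
  then have small: "eventually (\<lambda>n. (\<integral>\<^sup>+x. ennreal (\<bar>H (grad (\<phi> (s n)) x - G x)\<bar> powr p) * indicator \<Omega> x \<partial>lebesgue)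
      \<le> ennreal e) sequentially"
    by (rule eventually_subseq[OF s])
  have "(\<integral>\<^sup>+x. ennreal (\<bar>u x\<bar> powr ps) \<partial>lebesgue_on \<Omega>)
      \<le> liminf (\<lambda>n. \<integral>\<^sup>+x. ennreal (\<bar>\<phi> (s n) x\<bar> powr ps) \<partial>lebesgue_on \<Omega>)"
    by (rule nn_integral_powr_le_liminf[OF measurable_restrict_space1[OF Cc_inf_measurable[OF \<phi>]] conv ps])
  also have "\<dots> \<le> ennreal \<Gamma> * enn_powr (ennreal K * (Y + ennreal e)) (ps / p)"
  proof (rule Liminf_le)
    show "eventually (\<lambda>n. (\<integral>\<^sup>+x. ennreal (\<bar>\<phi> (s n) x\<bar> powr ps) \<partial>lebesgue_on \<Omega>)
        \<le> ennreal \<Gamma> * enn_powr (ennreal K * (Y + ennreal e)) (ps / p)) sequentially"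
      using small
    proof eventually_elim
      case (elim n)
      then have "enn_powr (ennreal K * (Y + (\<integral>\<^sup>+x. ennreal (\<bar>H (grad (\<phi> (s n)) x - G x)\<bar> powr p)
          * indicator \<Omega> x \<partial>lebesgue))) (ps / p) \<le> enn_powr (ennreal K * (Y + ennreal e)) (ps / p)"
        using ps exponents by (intro enn_powr_mono mult_left_mono add_left_mono) auto
      then have "ennreal \<Gamma> * enn_powr (ennreal K * (Y + (\<integral>\<^sup>+x. ennreal (\<bar>H (grad (\<phi> (s n)) x - G x)\<bar> powr p)
          * indicator \<Omega> x \<partial>lebesgue))) (ps / p) \<le> ennreal \<Gamma> * enn_powr (ennreal K * (Y + ennreal e)) (ps / p)"
        by (rule mult_left_mono) simp
      with Sobolev[of "s n"] show ?case unfolding \<Gamma>_def by (rule order_trans)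
    qed
  qed simp
  also have "ennreal K * (Y + ennreal e) = ennreal (K * (y + e))"
    using y e K by (simp add: Y ennreal_plus ennreal_mult)
  also have "ennreal \<Gamma> * enn_powr (ennreal (K * (y + e))) (ps / p) = ennreal (\<Gamma> * (K * (y + e)) powr (ps / p))"
    using y e by (simp add: K_def \<Gamma>_def enn_powr_ennreal ennreal_mult)
  finally show ?thesis by (simp add: \<Gamma>_def K_def y_def)
qed
lemma W0_Sobolev_inequality:
  assumes N: "CARD('n) \<ge> 2" "p < real CARD('n)" and uG: "(u, G) \<in> W0 \<Omega> H \<mu> p q"
  defines "ps \<equiv> sobolev_conj (real CARD('n)) p"
    and "S \<equiv> (p * (real CARD('n) - 1) / (real CARD('n) - p)) powr sobolev_conj (real CARD('n)) p
              * (2 powr p / c powr p) powr (sobolev_conj (real CARD('n)) p / p)"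
  shows "integrable (lebesgue_on \<Omega>) (\<lambda>x. \<bar>u x\<bar> powr ps)"
    and "(\<integral>x. \<bar>u x\<bar> powr ps \<partial>lebesgue_on \<Omega>) \<le> S * (\<integral>x. \<bar>H (G x)\<bar> powr p \<partial>lebesgue_on \<Omega>) powr (ps / p)"
proof -
  note bound = W0_Sobolev_nn_bound[OF N uG, folded ps_def]
  have [measurable]: "u \<in> borel_measurable lebesgue" using uG unfolding W0_def by blast
  have u: "(\<lambda>x. \<bar>u x\<bar> powr ps) \<in> borel_measurable (lebesgue_on \<Omega>)"
    by (intro measurable_restrict_space1) measurable
  show int: "integrable (lebesgue_on \<Omega>) (\<lambda>x. \<bar>u x\<bar> powr ps)"
    using order_le_less_trans[OF bound[of 1] ennreal_less_top] u by (intro integrableI_nonneg) auto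
  define \<Gamma> where "\<Gamma> = (p * (real CARD('n) - 1) / (real CARD('n) - p)) powr ps"
  define K where "K = 2 powr p / c powr p"
  define y where "y = (\<integral>x. \<bar>H (G x)\<bar> powr p \<partial>lebesgue_on \<Omega>)"
  have y: "0 \<le> y" unfolding y_def by (rule integral_nonneg_AE) auto
  have le: "(\<integral>x. \<bar>u x\<bar> powr ps \<partial>lebesgue_on \<Omega>) \<le> \<Gamma> * (K * (y + e)) powr (ps / p)" if "e > 0" for e
    using bound[OF that] nn_integral_eq_integral[OF int] by (simp add: ennreal_le_iff \<Gamma>_def K_def y_def)
  have "(\<integral>x. \<bar>u x\<bar> powr ps \<partial>lebesgue_on \<Omega>) \<le> \<Gamma> * (K * y) powr (ps / p)"
    by (rule le_powr_of_forall_pos[OF le]) (use N exponents y in \<open>auto simp: K_def ps_def sobolev_conj_def\<close>)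
  also have "\<dots> = S * y powr (ps / p)"
    using c_pos y powr_mult[of "2 powr p / c powr p" y "ps / p"] by (simp add: S_def ps_def \<Gamma>_def K_def)
  finally show "(\<integral>x. \<bar>u x\<bar> powr ps \<partial>lebesgue_on \<Omega>) \<le> S * (\<integral>x. \<bar>H (G x)\<bar> powr p \<partial>lebesgue_on \<Omega>) powr (ps / p)"
    unfolding y_def .
qed

end

section \<open>Fibering maps and Nehari sets\<close>

lemma le_mult_powr_imp_le:
  fixes Z t K \<theta> :: real
  assumes Z: "Z \<le> K * t powr \<theta>" and t: "0 \<le> t" "t \<le> Z" and th: "0 < \<theta>" "\<theta> < 1" and K: "K \<ge> 0"
  shows "Z \<le> K powr (1 / (1 - \<theta>))"
proof (cases "t = 0")
  case True
  then have "Z \<le> 0" using Z by simp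
  also have "0 \<le> K powr (1 / (1 - \<theta>))" by simp
  finally show ?thesis .
next
  case False
  then have t0: "t > 0" using t by simp
  have "t \<le> K * t powr \<theta>" using Z t by simp
  then have "t / t powr \<theta> \<le> K" using t0 by (simp add: divide_le_eq mult.commute)
  moreover have "t / t powr \<theta> = t powr (1 - \<theta>)" using t0 by (simp add: powr_diff)
  ultimately have h: "t powr (1 - \<theta>) \<le> K" by simp
  have "t = (t powr (1 - \<theta>)) powr (1 / (1 - \<theta>))" using t0 th by (simp add: powr_powr)
  also have "\<dots> \<le> K powr (1 / (1 - \<theta>))" using h th t0 by (intro powr_mono2) auto
  finally have tK: "t \<le> K powr (1 / (1 - \<theta>))" .
  have "t powr \<theta> \<le> (K powr (1 / (1 - \<theta>))) powr \<theta>" using tK t0 th by (intro powr_mono2) auto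
  also have "\<dots> = K powr (\<theta> / (1 - \<theta>))" by (simp add: powr_powr)
  finally have "K * t powr \<theta> \<le> K * K powr (\<theta> / (1 - \<theta>))" using K by (intro mult_left_mono) auto
  also have "\<dots> = K powr (1 / (1 - \<theta>))"
  proof (cases "K = 0")
    case True then show ?thesis by simp
  next
    case False
    then have "K * K powr (\<theta> / (1 - \<theta>)) = K powr (1 + \<theta> / (1 - \<theta>))" using K by (simp add: powr_add)
    also have "1 + \<theta> / (1 - \<theta>) = 1 / (1 - \<theta>)" using th by (simp add: field_simps)
    finally show ?thesis .
  qed
  finally show ?thesis using Z by simp
qed

lemma less_mult_powr_imp_gt:
  fixes t A L e :: real
  assumes h: "A * t < L * t powr e" and t: "t \<ge> 0" and A: "A > 0" and L: "L > 0" and e: "e > 1"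
  shows "t > (A / L) powr (1 / (e - 1))"
proof -
  have t0: "t > 0" using h t by (cases "t = 0") auto
  have "A / L < t powr e / t" using h t0 L by (simp add: field_simps)
  also have "t powr e / t = t powr (e - 1)" using t0 by (simp add: powr_diff)
  finally have h2: "A / L < t powr (e - 1)" .
  have "(A / L) powr (1 / (e - 1)) < (t powr (e - 1)) powr (1 / (e - 1))"
    using h2 A L e by (intro powr_less_mono2) auto
  also have "\<dots> = t" using t0 e by (simp add: powr_powr)
  finally show ?thesis .
qed

lemma integral_le_if_nn_integral_abs_le:
  fixes f :: "'a \<Rightarrow> real"
  assumes le: "(\<integral>\<^sup>+x. ennreal \<bar>f x\<bar> \<partial>M) \<le> ennreal R" and R: "0 \<le> R"
  shows "integral\<^sup>L M f \<le> R"
proof (cases "integrable M f")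
  case True
  have "integral\<^sup>L M f \<le> integral\<^sup>L M (\<lambda>x. \<bar>f x\<bar>)"
    using True by (intro integral_mono) auto
  also have "ennreal (integral\<^sup>L M (\<lambda>x. \<bar>f x\<bar>)) = (\<integral>\<^sup>+x. ennreal \<bar>f x\<bar> \<partial>M)"
    using True by (intro nn_integral_eq_integral[symmetric]) auto
  then have "ennreal (integral\<^sup>L M (\<lambda>x. \<bar>f x\<bar>)) \<le> ennreal R" using le by simp
  then have "integral\<^sup>L M (\<lambda>x. \<bar>f x\<bar>) \<le> R" using R by (simp add: ennreal_le_iff)
  finally show ?thesis .
next
  case False then show ?thesis using R by (simp add: not_integrable_integral_eq)
qed

lemma integral_Hoelder_singular:
  fixes a u :: "'a \<Rightarrow> real"
  assumes [measurable]: "a \<in> borel_measurable M" "u \<in> borel_measurable M"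
    and a: "integrable M (\<lambda>x. \<bar>a x\<bar> powr (s / (s - 1 + \<delta>)))" and u: "integrable M (\<lambda>x. \<bar>u x\<bar> powr s)"
    and \<delta>: "0 < \<delta>" "\<delta> < 1" and s: "1 < s"
  shows "(\<integral>x. a x * \<bar>u x\<bar> powr (1 - \<delta>) \<partial>M)
    \<le> (\<integral>x. \<bar>a x\<bar> powr (s / (s - 1 + \<delta>)) \<partial>M) powr ((s - 1 + \<delta>) / s) * (\<integral>x. \<bar>u x\<bar> powr s \<partial>M) powr ((1 - \<delta>) / s)"
proof -
  define r where "r = s / (s - 1 + \<delta>)"
  define \<alpha> where "\<alpha> = (s - 1 + \<delta>) / s"
  define A where "A = (\<integral>x. \<bar>a x\<bar> powr r \<partial>M)"
  define X where "X = (\<integral>x. \<bar>u x\<bar> powr s \<partial>M)"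
  have d: "0 < s - 1 + \<delta>" "0 < s" using \<delta> s by auto
  have \<alpha>: "0 < \<alpha>" "\<alpha> < 1" "r * \<alpha> = 1" "1 - \<alpha> = (1 - \<delta>) / s"
    using d \<delta> by (simp_all add: \<alpha>_def r_def divide_less_eq) (simp add: field_simps)
  have \<alpha>_s: "s * (1 - \<alpha>) = 1 - \<delta>" using \<alpha>(4) d by simp
  have A: "(\<integral>\<^sup>+x. ennreal (\<bar>a x\<bar> powr r) \<partial>M) = ennreal A" "0 \<le> A"
    using a by (auto simp: A_def r_def nn_integral_eq_integral intro: integral_nonneg_AE)
  have X: "(\<integral>\<^sup>+x. ennreal (\<bar>u x\<bar> powr s) \<partial>M) = ennreal X" "0 \<le> X"
    using u by (auto simp: X_def nn_integral_eq_integral intro: integral_nonneg_AE)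
  have "(\<integral>\<^sup>+x. ennreal \<bar>a x * \<bar>u x\<bar> powr (1 - \<delta>)\<bar> \<partial>M)
      = (\<integral>\<^sup>+x. ennreal (\<bar>a x\<bar> powr (r * \<alpha>) * \<bar>u x\<bar> powr (s * (1 - \<alpha>))) \<partial>M)"
    by (simp add: \<alpha>(3) \<alpha>_s abs_mult)
  also have "\<dots> \<le> enn_powr (\<integral>\<^sup>+x. ennreal (\<bar>a x\<bar> powr r) \<partial>M) \<alpha>
      * enn_powr (\<integral>\<^sup>+x. ennreal (\<bar>u x\<bar> powr s) \<partial>M) (1 - \<alpha>)"
    by (rule nn_integral_Hoelder_real[OF assms(1,2) \<alpha>(1,2)]) (use d in \<open>auto simp: r_def\<close>)
  also have "\<dots> = enn_powr (ennreal A) \<alpha> * enn_powr (ennreal X) (1 - \<alpha>)"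
    by (simp only: A(1) X(1))
  also have "\<dots> = ennreal (A powr \<alpha> * X powr (1 - \<alpha>))"
    using A X by (simp add: enn_powr_ennreal ennreal_mult)
  finally have "(\<integral>\<^sup>+x. ennreal \<bar>a x * \<bar>u x\<bar> powr (1 - \<delta>)\<bar> \<partial>M) \<le> ennreal (A powr \<alpha> * X powr ((1 - \<delta>) / s))"
    unfolding \<alpha>(4) .
  then show ?thesis
    using A X by (intro integral_le_if_nn_integral_abs_le) (auto simp: A_def X_def r_def \<alpha>_def)
qed

lemma integral_mult_bounded_le:
  fixes b f :: "'a \<Rightarrow> real"
  assumes b: "b \<in> borel_measurable M" "AE x in M. \<bar>b x\<bar> \<le> B"
    and f: "integrable M f" "AE x in M. 0 \<le> f x"
  shows "(\<integral>x. b x * f x \<partial>M) \<le> B * (\<integral>x. f x \<partial>M)"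
proof -
  have "AE x in M. \<bar>b x * f x\<bar> \<le> B * f x"
    using b(2) f(2) by eventually_elim (auto simp: abs_mult intro: mult_right_mono)
  moreover have "AE x in M. norm (b x * f x) \<le> norm (B * f x)"
    using calculation by eventually_elim auto
  then have "integrable M (\<lambda>x. b x * f x)"
    using b(1) f(1) by (intro Bochner_Integration.integrable_bound[OF integrable_mult_right[OF f(1)]]) auto
  ultimately have "(\<integral>x. b x * f x \<partial>M) \<le> (\<integral>x. B * f x \<partial>M)"
    using f(1) by (intro integral_mono_AE) (auto elim: AE_mp)
  then show ?thesis by simp
qed

lemma nehari_plus_bound:
  fixes Ip Iq Ia Ib lam A p q s \<delta> :: real
  assumes eq: "Ip + Iq - Ia - lam * Ib = 0"
    and pos: "(p - 1) * Ip + (q - 1) * Iq + \<delta> * Ia - lam * (s - 1) * Ib > 0"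
    and I: "0 \<le> Ip" "0 \<le> Iq" and Ia: "Ia \<le> A * Ip powr ((1 - \<delta>) / p)" and A: "0 \<le> A"
    and exps: "1 < p" "p < q" "q < s" and \<delta>: "0 < \<delta>" "\<delta> < 1"
  shows "Ip + Iq \<le> ((s - 1 + \<delta>) * A / (s - q)) powr (p / (p - 1 + \<delta>))"
proof -
  \<comment> \<open>the critical term cancels in \<open>\<phi>''(1) - (s - 1) \<phi>'(1) > 0\<close>\<close>
  have "(p - 1) * Ip + (q - 1) * Iq + \<delta> * Ia - lam * (s - 1) * Ib
      = (p - s) * Ip + (q - s) * Iq + (s - 1 + \<delta>) * Ia + (s - 1) * (Ip + Iq - Ia - lam * Ib)"
    by (simp add: algebra_simps)
  moreover have "(s - q) * (Ip + Iq) + (p - s) * Ip + (q - s) * Iq = (p - q) * Ip"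
    by (simp add: algebra_simps)
  moreover have "(p - q) * Ip \<le> 0"
    using exps I by (simp add: mult_nonpos_nonneg)
  moreover have "(s - 1) * (Ip + Iq - Ia - lam * Ib) = 0"
    using eq by simp
  ultimately have "(s - q) * (Ip + Iq) < (s - 1 + \<delta>) * Ia"
    using eq pos by linarith
  also have "\<dots> \<le> (s - 1 + \<delta>) * (A * Ip powr ((1 - \<delta>) / p))"
    using Ia exps \<delta> by (intro mult_left_mono) auto
  finally have "Ip + Iq \<le> (s - 1 + \<delta>) * A / (s - q) * Ip powr ((1 - \<delta>) / p)"
    using exps by (simp add: field_simps)
  then have "Ip + Iq \<le> ((s - 1 + \<delta>) * A / (s - q)) powr (1 / (1 - (1 - \<delta>) / p))"
    using I A exps \<delta> by (intro le_mult_powr_imp_le) auto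
  moreover have "1 / (1 - (1 - \<delta>) / p) = p / (p - 1 + \<delta>)"
    using exps by (simp add: field_simps)
  ultimately show ?thesis by simp
qed

lemma nehari_minus_bound:
  fixes Ip Iq Ia Ib lam K p q s \<delta> :: real
  assumes eq: "Ip + Iq - Ia - lam * Ib = 0"
    and neg: "(p - 1) * Ip + (q - 1) * Iq + \<delta> * Ia - lam * (s - 1) * Ib < 0"
    and I: "0 \<le> Ip" "0 \<le> Iq" and Ib: "Ib \<le> K * Ip powr (s / p)" and K: "0 < K" and lam: "0 < lam"
    and exps: "1 < p" "p < q" "p < s" and \<delta>: "0 < \<delta>" "\<delta> < 1"
  shows "((p - 1 + \<delta>) / (lam * (s - 1 + \<delta>) * K)) powr (p / (s - p)) < Ip"
proof -
  \<comment> \<open>the singular term cancels in \<open>\<phi>''(1) + \<delta> \<phi>'(1) < 0\<close>\<close>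
  have "(p - 1) * Ip + (q - 1) * Iq + \<delta> * Ia - lam * (s - 1) * Ib + \<delta> * (Ip + Iq - Ia - lam * Ib)
      = (p - 1 + \<delta>) * Ip + (q - 1 + \<delta>) * Iq - lam * (s - 1 + \<delta>) * Ib"
    by (simp add: algebra_simps)
  moreover have "0 \<le> (q - 1 + \<delta>) * Iq"
    using exps \<delta> I by simp
  moreover have "\<delta> * (Ip + Iq - Ia - lam * Ib) = 0"
    using eq by simp
  ultimately have "(p - 1 + \<delta>) * Ip < lam * (s - 1 + \<delta>) * Ib"
    using neg by linarith
  also have "\<dots> \<le> (lam * (s - 1 + \<delta>) * K) * Ip powr (s / p)"
    using Ib lam exps \<delta> by (simp add: mult_left_mono mult.assoc)
  finally have lt: "(p - 1 + \<delta>) * Ip < (lam * (s - 1 + \<delta>) * K) * Ip powr (s / p)" .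
  have "((p - 1 + \<delta>) / (lam * (s - 1 + \<delta>) * K)) powr (1 / (s / p - 1)) < Ip"
    by (rule less_mult_powr_imp_gt[OF lt I(1)]) (use K lam exps \<delta> in \<open>auto simp: less_divide_eq_1_pos\<close>)
  moreover have "1 / (s / p - 1) = p / (s - p)"
    using exps by (simp add: field_simps)
  ultimately show ?thesis by simp
qed

lemma less_powr_of_less_threshold:
  fixes D K A lam e :: real
  assumes "0 < D" "0 < K" "0 < A" "0 < lam" "0 < e" and lam: "lam < A / (K * D powr (1 / e))"
  shows "D < (A / (lam * K)) powr e"
proof -
  have "D powr (1 / e) < A / (lam * K)"
    using assms by (simp add: field_simps)
  then have "(D powr (1 / e)) powr e < (A / (lam * K)) powr e"
    using assms by (intro powr_less_mono2) auto
  then show ?thesis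
    using assms by (simp add: powr_powr)
qed

context double_phase_setting
begin

lemma W0_fibering_derivatives:
  fixes a b :: "real^'n \<Rightarrow> real" and \<delta> lam :: real
  assumes ug: "(u, g) \<in> W0 \<Omega> H \<mu> p q"
  defines "Ip \<equiv> \<integral>x. H (g x) powr p \<partial>lebesgue_on \<Omega>"
    and "Iq \<equiv> \<integral>x. \<mu> x * H (g x) powr q \<partial>lebesgue_on \<Omega>"
    and "Ia \<equiv> \<integral>x. a x * \<bar>u x\<bar> powr (1 - \<delta>) \<partial>lebesgue_on \<Omega>"
    and "Ib \<equiv> \<integral>x. b x * \<bar>u x\<bar> powr sobolev_conj (real CARD('n)) p \<partial>lebesgue_on \<Omega>"
  shows "dphi1 \<Omega> H \<mu> a b p q \<delta> lam (u, g) = Ip + Iq - Ia - lam * Ib"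
    and "ddphi1 \<Omega> H \<mu> a b p q \<delta> lam (u, g)
           = (p - 1) * Ip + (q - 1) * Iq + \<delta> * Ia - lam * (sobolev_conj (real CARD('n)) p - 1) * Ib"
    and "(\<integral>x. H (g x) powr p + \<mu> x * H (g x) powr q \<partial>lebesgue_on \<Omega>) = Ip + Iq"
    and "0 \<le> Ip" "0 \<le> Iq"
proof -
  have int_p: "integrable (lebesgue_on \<Omega>) (\<lambda>x. H (g x) powr p)"
    using W0_gradient_integrable(1)[OF ug] by (simp add: powr_abs_base[symmetric])
  have int_q: "integrable (lebesgue_on \<Omega>) (\<lambda>x. \<mu> x * H (g x) powr q)"
    using W0_gradient_integrable(2)[OF ug] by (simp add: powr_abs_base[symmetric])
  show sum: "(\<integral>x. H (g x) powr p + \<mu> x * H (g x) powr q \<partial>lebesgue_on \<Omega>) = Ip + Iq"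
    unfolding Ip_def Iq_def by (rule Bochner_Integration.integral_add[OF int_p int_q])
  have "(\<integral>x. (p - 1) * H (g x) powr p + (q - 1) * \<mu> x * H (g x) powr q \<partial>lebesgue_on \<Omega>)
      = (p - 1) * Ip + (q - 1) * Iq"
    using Bochner_Integration.integral_add[OF integrable_mult_right[OF int_p, of "p - 1"]
        integrable_mult_right[OF int_q, of "q - 1"]]
    by (simp add: Ip_def Iq_def mult.assoc)
  then show "ddphi1 \<Omega> H \<mu> a b p q \<delta> lam (u, g)
      = (p - 1) * Ip + (q - 1) * Iq + \<delta> * Ia - lam * (sobolev_conj (real CARD('n)) p - 1) * Ib"
    by (simp add: ddphi1_def Let_def Ia_def Ib_def)
  show "dphi1 \<Omega> H \<mu> a b p q \<delta> lam (u, g) = Ip + Iq - Ia - lam * Ib"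
    using sum by (simp add: dphi1_def Let_def Ia_def Ib_def)
  show "0 \<le> Ip" unfolding Ip_def by (rule integral_nonneg_AE) auto
  show "0 \<le> Iq" unfolding Iq_def by (rule integral_nonneg_AE) (use mu_nonneg in auto)
qed

lemma W0_singular_term_bound:
  assumes N: "CARD('n) \<ge> 2" "p < real CARD('n)" and \<delta>: "0 < \<delta>" "\<delta> < 1"
    and a: "a \<in> borel_measurable (lebesgue_on \<Omega>)"
      "integrable (lebesgue_on \<Omega>) (\<lambda>x. \<bar>a x\<bar> powr (sobolev_conj (real CARD('n)) p
          / (sobolev_conj (real CARD('n)) p - 1 + \<delta>)))"
  obtains A where "0 \<le> A" "\<And>u G. (u, G) \<in> W0 \<Omega> H \<mu> p q \<Longrightarrow>
    (\<integral>x. a x * \<bar>u x\<bar> powr (1 - \<delta>) \<partial>lebesgue_on \<Omega>) \<le> A * (\<integral>x. H (G x) powr p \<partial>lebesgue_on \<Omega>) powr ((1 - \<delta>) / p)"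
proof -
  define ps where "ps = sobolev_conj (real CARD('n)) p"
  define S where "S = (p * (real CARD('n) - 1) / (real CARD('n) - p)) powr ps * (2 powr p / c powr p) powr (ps / p)"
  define A where "A = (\<integral>x. \<bar>a x\<bar> powr (ps / (ps - 1 + \<delta>)) \<partial>lebesgue_on \<Omega>) powr ((ps - 1 + \<delta>) / ps) * S powr ((1 - \<delta>) / ps)"
  have ps: "1 < ps" using sobolev_conj_gt[of p "real CARD('n)"] N exponents by (simp add: ps_def)
  have "(\<integral>x. a x * \<bar>u x\<bar> powr (1 - \<delta>) \<partial>lebesgue_on \<Omega>) \<le> A * (\<integral>x. H (G x) powr p \<partial>lebesgue_on \<Omega>) powr ((1 - \<delta>) / p)"
    if uG: "(u, G) \<in> W0 \<Omega> H \<mu> p q" for u G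
  proof -
    define X where "X = (\<integral>x. \<bar>u x\<bar> powr ps \<partial>lebesgue_on \<Omega>)"
    define y where "y = (\<integral>x. H (G x) powr p \<partial>lebesgue_on \<Omega>)"
    have "u \<in> borel_measurable lebesgue" using uG unfolding W0_def by blast
    then have [measurable]: "u \<in> borel_measurable (lebesgue_on \<Omega>)" by (rule measurable_restrict_space1)
    note sobolev = W0_Sobolev_inequality[OF N uG, folded ps_def]
    have X: "0 \<le> X" "X \<le> S * y powr (ps / p)"
      using sobolev(2) by (auto simp: X_def y_def S_def powr_abs_base[symmetric] intro: integral_nonneg_AE)
    have "(\<integral>x. a x * \<bar>u x\<bar> powr (1 - \<delta>) \<partial>lebesgue_on \<Omega>)
        \<le> (\<integral>x. \<bar>a x\<bar> powr (ps / (ps - 1 + \<delta>)) \<partial>lebesgue_on \<Omega>) powr ((ps - 1 + \<delta>) / ps) * X powr ((1 - \<delta>) / ps)"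
      unfolding X_def using a(2) sobolev(1) \<delta> ps by (intro integral_Hoelder_singular a(1)) (simp_all add: ps_def)
    also have "X powr ((1 - \<delta>) / ps) \<le> (S * y powr (ps / p)) powr ((1 - \<delta>) / ps)"
      using X \<delta> ps by (intro powr_mono2) auto
    also have "\<dots> = S powr ((1 - \<delta>) / ps) * y powr ((1 - \<delta>) / p)"
      using ps by (simp add: S_def powr_mult powr_powr)
    finally show ?thesis
      by (simp add: A_def y_def mult.assoc mult_left_mono)
  qed
  moreover have "0 \<le> A" by (simp add: A_def)
  ultimately show ?thesis using that by blast
qed

lemma W0_critical_term_bound:
  assumes N: "CARD('n) \<ge> 2" "p < real CARD('n)"
    and b: "b \<in> borel_measurable (lebesgue_on \<Omega>)" "AE x in lebesgue_on \<Omega>. \<bar>b x\<bar> \<le> B"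
  obtains K where "0 < K" "\<And>u G. (u, G) \<in> W0 \<Omega> H \<mu> p q \<Longrightarrow>
    (\<integral>x. b x * \<bar>u x\<bar> powr sobolev_conj (real CARD('n)) p \<partial>lebesgue_on \<Omega>)
      \<le> K * (\<integral>x. H (G x) powr p \<partial>lebesgue_on \<Omega>) powr (sobolev_conj (real CARD('n)) p / p)"
proof -
  define ps where "ps = sobolev_conj (real CARD('n)) p"
  define S where "S = (p * (real CARD('n) - 1) / (real CARD('n) - p)) powr ps * (2 powr p / c powr p) powr (ps / p)"
  have S: "0 < S" using N exponents c_pos by (simp add: S_def)
  have "(\<integral>x. b x * \<bar>u x\<bar> powr ps \<partial>lebesgue_on \<Omega>) \<le> max B 1 * S * (\<integral>x. H (G x) powr p \<partial>lebesgue_on \<Omega>) powr (ps / p)"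
    if uG: "(u, G) \<in> W0 \<Omega> H \<mu> p q" for u G
  proof -
    note sobolev = W0_Sobolev_inequality[OF N uG, folded ps_def]
    have "AE x in lebesgue_on \<Omega>. \<bar>b x\<bar> \<le> max B 1"
      using b(2) by eventually_elim auto
    then have "(\<integral>x. b x * \<bar>u x\<bar> powr ps \<partial>lebesgue_on \<Omega>) \<le> max B 1 * (\<integral>x. \<bar>u x\<bar> powr ps \<partial>lebesgue_on \<Omega>)"
      using b(1) sobolev(1) by (intro integral_mult_bounded_le) auto
    also have "\<dots> \<le> max B 1 * (S * (\<integral>x. H (G x) powr p \<partial>lebesgue_on \<Omega>) powr (ps / p))"
      using sobolev(2) by (intro mult_left_mono) (auto simp: S_def powr_abs_base[symmetric])
    finally show ?thesis by (simp add: mult.assoc)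
  qed
  moreover have "0 < max B 1 * S" using S by simp
  ultimately show ?thesis using that unfolding ps_def by blast
qed

lemma nehari_plus_energy_bounded:
  assumes N: "CARD('n) \<ge> 2" "p < real CARD('n)" and \<delta>: "0 < \<delta>" "\<delta> < 1"
    and a: "a \<in> borel_measurable (lebesgue_on \<Omega>)"
      "integrable (lebesgue_on \<Omega>) (\<lambda>x. \<bar>a x\<bar> powr (sobolev_conj (real CARD('n)) p
          / (sobolev_conj (real CARD('n)) p - 1 + \<delta>)))"
    and q: "q < sobolev_conj (real CARD('n)) p"
  obtains D where "0 < D" "\<And>lam u g. (u, g) \<in> nehari_plus \<Omega> H \<mu> a b p q \<delta> lam \<Longrightarrow>
    (\<integral>x. H (g x) powr p + \<mu> x * H (g x) powr q \<partial>lebesgue_on \<Omega>) \<le> D"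
proof -
  define ps where "ps = sobolev_conj (real CARD('n)) p"
  obtain A where A: "0 \<le> A" and singular: "\<And>u G. (u, G) \<in> W0 \<Omega> H \<mu> p q \<Longrightarrow>
    (\<integral>x. a x * \<bar>u x\<bar> powr (1 - \<delta>) \<partial>lebesgue_on \<Omega>) \<le> A * (\<integral>x. H (G x) powr p \<partial>lebesgue_on \<Omega>) powr ((1 - \<delta>) / p)"
    using W0_singular_term_bound[OF N \<delta> a] by blast
  define D where "D = ((ps - 1 + \<delta>) * A / (ps - q)) powr (p / (p - 1 + \<delta>)) + 1"
  have "(\<integral>x. H (g x) powr p + \<mu> x * H (g x) powr q \<partial>lebesgue_on \<Omega>) \<le> D"
    if ug: "(u, g) \<in> nehari_plus \<Omega> H \<mu> a b p q \<delta> lam" for lam u g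
  proof -
    have W: "(u, g) \<in> W0 \<Omega> H \<mu> p q" and "dphi1 \<Omega> H \<mu> a b p q \<delta> lam (u, g) = 0"
      and "ddphi1 \<Omega> H \<mu> a b p q \<delta> lam (u, g) > 0"
      using ug unfolding nehari_plus_def nehari_def by auto
    note d = W0_fibering_derivatives[OF W, folded ps_def]
    have "(\<integral>x. H (g x) powr p + \<mu> x * H (g x) powr q \<partial>lebesgue_on \<Omega>)
        \<le> ((ps - 1 + \<delta>) * A / (ps - q)) powr (p / (p - 1 + \<delta>))"
      unfolding d(3)
      by (rule nehari_plus_bound[OF _ _ d(4,5) singular[OF W] A])
        (use d(1,2) \<open>dphi1 _ _ _ _ _ _ _ _ _ _ = 0\<close> \<open>ddphi1 _ _ _ _ _ _ _ _ _ _ > 0\<close> exponents q \<delta> in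
          \<open>simp_all add: ps_def\<close>)
    then show ?thesis by (simp add: D_def)
  qed
  moreover have "0 < D" by (simp add: D_def add_nonneg_pos)
  ultimately show ?thesis using that by blast
qed

lemma nehari_minus_gradient_lower_bound:
  assumes N: "CARD('n) \<ge> 2" "p < real CARD('n)" and \<delta>: "0 < \<delta>" "\<delta> < 1"
    and b: "b \<in> borel_measurable (lebesgue_on \<Omega>)" "AE x in lebesgue_on \<Omega>. \<bar>b x\<bar> \<le> B"
  obtains K where "0 < K" "\<And>lam U G. 0 < lam \<Longrightarrow> (U, G) \<in> nehari_minus \<Omega> H \<mu> a b p q \<delta> lam \<Longrightarrow>
    ((p - 1 + \<delta>) / (lam * K)) powr (p / (sobolev_conj (real CARD('n)) p - p))
      < (\<integral>x. H (G x) powr p \<partial>lebesgue_on \<Omega>)"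
proof -
  define ps where "ps = sobolev_conj (real CARD('n)) p"
  obtain K where K: "0 < K" and critical: "\<And>u G. (u, G) \<in> W0 \<Omega> H \<mu> p q \<Longrightarrow>
    (\<integral>x. b x * \<bar>u x\<bar> powr ps \<partial>lebesgue_on \<Omega>) \<le> K * (\<integral>x. H (G x) powr p \<partial>lebesgue_on \<Omega>) powr (ps / p)"
    using W0_critical_term_bound[OF N b] unfolding ps_def by blast
  have ps: "p < ps" using sobolev_conj_gt[of p "real CARD('n)"] N exponents by (simp add: ps_def)
  have "((p - 1 + \<delta>) / (lam * ((ps - 1 + \<delta>) * K))) powr (p / (ps - p)) < (\<integral>x. H (G x) powr p \<partial>lebesgue_on \<Omega>)"
    if lam: "0 < lam" and UG: "(U, G) \<in> nehari_minus \<Omega> H \<mu> a b p q \<delta> lam" for lam U G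
  proof -
    have W: "(U, G) \<in> W0 \<Omega> H \<mu> p q" and "dphi1 \<Omega> H \<mu> a b p q \<delta> lam (U, G) = 0"
      and "ddphi1 \<Omega> H \<mu> a b p q \<delta> lam (U, G) < 0"
      using UG unfolding nehari_minus_def nehari_def by auto
    note d = W0_fibering_derivatives[OF W, folded ps_def]
    have "((p - 1 + \<delta>) / (lam * (ps - 1 + \<delta>) * K)) powr (p / (ps - p)) < (\<integral>x. H (G x) powr p \<partial>lebesgue_on \<Omega>)"
      by (rule nehari_minus_bound[OF _ _ d(4,5) critical[OF W] K lam])
        (use d(1,2) \<open>dphi1 _ _ _ _ _ _ _ _ _ _ = 0\<close> \<open>ddphi1 _ _ _ _ _ _ _ _ _ _ < 0\<close> exponents ps \<delta> in
          simp_all)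
    then show ?thesis by (simp add: mult.assoc)
  qed
  moreover have "0 < (ps - 1 + \<delta>) * K" using K ps exponents \<delta> by simp
  ultimately show ?thesis using that unfolding ps_def by blast
qed

end

lemma double_phase_setting_exists:
  fixes \<Omega> :: "(real^'n::finite) set" and H \<mu> :: "real^'n \<Rightarrow> real"
  assumes \<Omega>: "bounded \<Omega>" "lipschitz_domain \<Omega>" and H: "finsler_minkowski_norm H"
    and \<mu>: "\<exists>L. L-lipschitz_on (closure \<Omega>) \<mu>" "\<forall>x\<in>closure \<Omega>. 0 \<le> \<mu> x"
    and exps: "1 < p" "p < q"
  obtains c C M\<mu> where "double_phase_setting \<Omega> H \<mu> p q c C M\<mu>"
proof -
  have open_\<Omega>: "open \<Omega>" using \<Omega>(2) unfolding lipschitz_domain_def by blast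
  obtain c C where c: "c > 0" "\<And>\<xi>. c * norm \<xi> \<le> \<bar>H \<xi>\<bar>" and C: "C > 0" "\<And>\<xi>. \<bar>H \<xi>\<bar> \<le> C * norm \<xi>"
    using finsler_minkowski_norm_equivalent[OF H] by metis
  obtain L where "L-lipschitz_on (closure \<Omega>) \<mu>" using \<mu>(1) by blast
  then have \<mu>_cont: "continuous_on (closure \<Omega>) \<mu>" by (rule lipschitz_on_continuous_on)
  have "compact (\<mu> ` closure \<Omega>)"
    using \<Omega>(1) by (intro compact_continuous_image[OF \<mu>_cont]) (simp add: compact_closure)
  then obtain M where M: "\<And>y. y \<in> \<mu> ` closure \<Omega> \<Longrightarrow> norm y \<le> M"
    using compact_imp_bounded bounded_iff by metis
  have \<mu>_bounds: "0 \<le> \<mu> x \<and> \<mu> x \<le> max M 0" if "x \<in> \<Omega>" for x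
    using that closure_subset \<mu>(2) M[of "\<mu> x"] by force
  have "\<mu> \<in> borel_measurable (lebesgue_on \<Omega>)"
    using open_\<Omega> by (intro continuous_imp_measurable_on_sets_lebesgue continuous_on_subset[OF \<mu>_cont closure_subset]) auto
  then have "(\<lambda>x. \<mu> x * indicator \<Omega> x) \<in> borel_measurable lebesgue"
    using borel_measurable_restrict_space_iff[of \<Omega> lebesgue \<mu>] open_\<Omega> by (simp add: mult.commute)
  then have "double_phase_setting \<Omega> H \<mu> p q c C (max M 0)"
    using open_\<Omega> \<Omega>(1) finsler_minkowski_norm_continuous[OF H] c C \<mu>_bounds exps
    by unfold_locales auto
  then show ?thesis by (rule that)
qed

theorem mainTheorem14:
  fixes \<Omega> :: "(real^'n) set" and H :: "real^'n \<Rightarrow> real"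
    and \<mu> a b :: "real^'n \<Rightarrow> real" and p q \<alpha> \<delta> :: real
  assumes "CARD('n) \<ge> 2"
    and "bounded \<Omega>" and "lipschitz_domain \<Omega>"
    and "finsler_minkowski_norm H"
    and "0 < \<delta>" and "\<delta> < 1"
    and "2 \<le> p" and "p < q" and "q < real CARD('n)"
    and "q < \<alpha> + 1" and "\<alpha> + 1 \<le> sobolev_conj (real CARD('n)) p"
    and "q / p < 1 + 1 / real CARD('n)"
    and "\<exists>L. L-lipschitz_on (closure \<Omega>) \<mu>" and "\<forall>x\<in>closure \<Omega>. 0 \<le> \<mu> x"
    and "a \<in> borel_measurable (lebesgue_on \<Omega>)"
    and "AE x in lebesgue_on \<Omega>. a x > 0"
    and "integrable (lebesgue_on \<Omega>)
           (\<lambda>x. \<bar>a x\<bar> powr (sobolev_conj (real CARD('n)) p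
                 / (sobolev_conj (real CARD('n)) p - 1 + \<delta>)))"
    and "b \<in> borel_measurable (lebesgue_on \<Omega>)"
    and "\<exists>C. AE x in lebesgue_on \<Omega>. \<bar>b x\<bar> \<le> C"
    and "\<not> (AE x in lebesgue_on \<Omega>. b x \<le> 0)"
    and "\<alpha> + 1 = sobolev_conj (real CARD('n)) p"
  shows "\<exists>\<Lambda>>0. \<exists>D2>0. \<forall>lam. 0 < lam \<and> lam < \<Lambda> \<longrightarrow>
           (\<exists>D1>D2.
              (\<forall>U G. (U, G) \<in> nehari_minus \<Omega> H \<mu> a b p q \<delta> lam \<longrightarrow>
                  integral\<^sup>L (lebesgue_on \<Omega>) (\<lambda>x. H (G x) powr p) \<ge> D1)
            \<and> (\<forall>u g. (u, g) \<in> nehari_plus \<Omega> H \<mu> a b p q \<delta> lam \<longrightarrow>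
                  integral\<^sup>L (lebesgue_on \<Omega>) (\<lambda>x. H (g x) powr p + \<mu> x * H (g x) powr q) \<le> D2))"
proof -
  define ps where "ps = sobolev_conj (real CARD('n)) p"
  have N: "CARD('n) \<ge> 2" "p < real CARD('n)" using assms(1,8,9) by auto
  have exps: "1 < p" "p < q" "q < ps" using assms(7,8,10,21) by (auto simp: ps_def)
  obtain c C M\<mu> where "double_phase_setting \<Omega> H \<mu> p q c C M\<mu>"
    using double_phase_setting_exists[OF assms(2,3,4,13,14)] exps by blast
  then interpret double_phase_setting \<Omega> H \<mu> p q c C M\<mu> .
  obtain D2 where D2: "0 < D2" "\<And>lam u g. (u, g) \<in> nehari_plus \<Omega> H \<mu> a b p q \<delta> lam \<Longrightarrow>
      (\<integral>x. H (g x) powr p + \<mu> x * H (g x) powr q \<partial>lebesgue_on \<Omega>) \<le> D2"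
    using nehari_plus_energy_bounded[OF N assms(5,6,15,17)] exps unfolding ps_def by blast
  obtain B where "AE x in lebesgue_on \<Omega>. \<bar>b x\<bar> \<le> B" using assms(19) by blast
  then obtain K where K: "0 < K" "\<And>lam U G. 0 < lam \<Longrightarrow> (U, G) \<in> nehari_minus \<Omega> H \<mu> a b p q \<delta> lam \<Longrightarrow>
      ((p - 1 + \<delta>) / (lam * K)) powr (p / (ps - p)) < (\<integral>x. H (G x) powr p \<partial>lebesgue_on \<Omega>)"
    using nehari_minus_gradient_lower_bound[OF N assms(5,6,18)] unfolding ps_def by blast
  define \<Lambda> where "\<Lambda> = (p - 1 + \<delta>) / (K * D2 powr ((ps - p) / p))"
  have "\<exists>D1>D2. (\<forall>U G. (U, G) \<in> nehari_minus \<Omega> H \<mu> a b p q \<delta> lam \<longrightarrow>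
                  integral\<^sup>L (lebesgue_on \<Omega>) (\<lambda>x. H (G x) powr p) \<ge> D1)
            \<and> (\<forall>u g. (u, g) \<in> nehari_plus \<Omega> H \<mu> a b p q \<delta> lam \<longrightarrow>
                  integral\<^sup>L (lebesgue_on \<Omega>) (\<lambda>x. H (g x) powr p + \<mu> x * H (g x) powr q) \<le> D2)"
    if lam: "0 < lam" "lam < \<Lambda>" for lam
  proof (intro exI[of _ "((p - 1 + \<delta>) / (lam * K)) powr (p / (ps - p))"] conjI allI impI)
    show "D2 < ((p - 1 + \<delta>) / (lam * K)) powr (p / (ps - p))"
    proof (rule less_powr_of_less_threshold)
      show "lam < (p - 1 + \<delta>) / (K * D2 powr (1 / (p / (ps - p))))"
        using lam(2) by (simp add: \<Lambda>_def)
    qed (use lam D2(1) K(1) exps assms(5) in auto)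
  qed (use K(2)[OF lam(1)] D2(2) in \<open>auto intro: less_imp_le\<close>)
  moreover have "0 < \<Lambda>" using D2(1) K(1) exps assms(5) by (simp add: \<Lambda>_def)
  ultimately show ?thesis using D2(1) by blast
qed

end
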